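(* Let $\Gamma\subset SL(2,\mathbb Z)$ be a congruence subgroup, $(\lambda_0,\mu_0)$ a partition pair, and $(\lambda_1,\mu_1)$ the largest partition pair with $(\lambda_1,\mu_1)<(\lambda_0,\mu_0)$ and $|\lambda_1|+|\mu_1|=|\lambda_0|+|\mu_0|$ (assumed to exist). Then the map $\sum_{(\lambda,\mu)\le(\lambda_0,\mu_0)}a_{-\lambda}b_{-\mu}f_{\lambda,\mu}\mapsto f_{\lambda_0,\mu_0}$ sends $(V_{\lambda_0,\mu_0})^\Gamma_0$ into $M_{2(p(\mu_0)-p(\lambda_0))}(\Gamma)$ with kernel $(V_{\lambda_1,\mu_1})^\Gamma_0$; in particular \[ (V_{\lambda_0,\mu_0})^\Gamma_0/(V_{\lambda_1,\mu_1})^\Gamma_0\subset M_{2(p(\mu_0)-p(\lambda_0))}(\Gamma). \]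
   Context: Let $\mathbb H$ be the upper half plane and $\mathcal O(\mathbb H)$ its ring of holomorphic functions. Let $V=\mathbb C[a_{-1},a_{-2},\dots,b_0,b_{-1},\dots]$ be the vacuum module of the Heisenberg Lie algebra $[a_m,b_n]=\delta_{m,-n}C$ (with $a_m1=0$ for $m\ge0$, $b_n1=0$ for $n>0$, $C=1$), a vertex algebra with fields $a(z)=\sum a_nz^{-n-1}$, $b(z)=\sum b_nz^{-n}$. Let $\mathscr D^{ch}(\mathbb H)=V\otimes_{\mathbb C[b_0]}\mathcal O(\mathbb H)$ ($b_0\mapsto\tau$, $b=b_0$), the vertex algebra of chiral differential operators on $\mathbb H$, with $Y(f,z)=\sum_{i\ge0}\frac{f^{(i)}(b)}{i!}(\sum_{n\ne0}b_nz^{-n})^i$ for $f\in\mathcal O(\mathbb H)$. For a partition $\lambda=(\lambda_{(1)}\ge\dots\ge\lambda_{(d)}\ge1)$ set $p(\lambda)=d$, $|\lambda|=\sum\lambda_{(i)}$, $a_{-\lambda}=a_{-\lambda_{(1)}}\cdots a_{-\lambda_{(d)}}$, similarly $b_{-\mu}$ (empty partition allowed, $a_{-\emptyset}=1$, $p(\emptyset)=|\emptyset|=0$). Every element of $\mathscr D^{ch}(\mathbb H)$ is uniquely a finite sum $\sum a_{-\lambda}b_{-\mu}f_{\lambda,\mu}(b)$. $SL(2,\mathbb R)$ acts on the right by vertex algebra automorphisms $\pi(g)$, integrating the zero modes of $E=-a_{-1}$, $F=a_{-1}b_0^2+2b_{-1}$, $H=-2a_{-1}b_0$ via $\pi(e^x)=\exp(-x_{(0)})$;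 for $g=\begin{pmatrix}\alpha&\beta\\\gamma&\delta\end{pmatrix}$, $\pi(g)a_{-1}=a_{-1}(\gamma b+\delta)^2+2\gamma^2b_{-1}$ and $\pi(g)f(b)=f(\frac{\alpha b+\beta}{\gamma b+\delta})$. Order on partitions: $\lambda>\lambda'$ if either the first differing entry (at some index $j\le\min(p(\lambda),p(\lambda'))$) is larger in $\lambda$, or $p(\lambda)>p(\lambda')$ and $\lambda'$ agrees with the first $p(\lambda')$ entries of $\lambda$. Set $l(\lambda,\mu)=p(\lambda)-p(\mu)$. Order on pairs: $(\lambda,\mu)>(\lambda',\mu')$ if $l(\lambda,\mu)>l(\lambda',\mu')$; or $l(\lambda,\mu)=l(\lambda',\mu')$ and $\lambda>\lambda'$; or $\lambda=\lambda'$, $p(\mu)=p(\mu')$ and $\mu<\mu'$. $V_{\lambda,\mu}$ is the span of all $a_{-\lambda'}b_{-\mu'}f(b)$, $f\in\mathcal O(\mathbb H)$, with $(\lambda',\mu')\le(\lambda,\mu)$ and $|\lambda'|+|\mu'|=|\lambda|+|\mu|$. For a congruence subgroup $\Gamma$, $(V_{\lambda,\mu})^\Gamma_0$ is the set of $\Gamma$-invariant elements of $V_{\lambda,\mu}$ holomorphic at all cusps, where a $\Gamma$-invariant $v$ is holomorphic at the cusp $c$ if, for $\rho\in SL(2,\mathbb Z)$ with $\rho(c)=\infty$ and $\pi(\rho)v=\sum a_{-\lambda}b_{-\mu}\tilde f_{\lambda,\mu}$ (each $\tilde f_{\lambda,\mu}$ being $N$-periodic for some integer $N>0$), the Fourier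 expansions $\tilde f_{\lambda,\mu}=\sum_m\tilde u(m)e^{2\pi im\tau/N}$ have $\tilde u(m)=0$ for $m<0$. $M_k(\Gamma)$ denotes holomorphic modular forms of weight $k$ for $\Gamma$ ($M_k(\Gamma)=0$ for $k<0$). *)

theory Defs
  imports "HOL-Analysis.Analysis" "HOL-Complex_Analysis.Complex_Analysis" "HOL-Library.Multiset"
begin

type_synonym rmat = "real \<times> real \<times> real \<times> real"   (* (alpha, beta, gamma, delta) *)
type_synonym imat = "int \<times> int \<times> int \<times> int"

definition of_intm :: "imat \<Rightarrow> rmat" where
  "of_intm g = (case g of (a,b,c,d) \<Rightarrow> (real_of_int a, real_of_int b, real_of_int c, real_of_int d))"

definition SL2Z :: "imat set" where
  "SL2Z = {(a,b,c,d). a*d - b*c = 1}"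

definition mmul :: "imat \<Rightarrow> imat \<Rightarrow> imat" where
  "mmul g h = (case g of (a,b,c,d) \<Rightarrow> case h of (a',b',c',d') \<Rightarrow>
     (a*a' + b*c', a*b' + b*d', c*a' + d*c', c*b' + d*d'))"

definition minv :: "imat \<Rightarrow> imat" where
  "minv g = (case g of (a,b,c,d) \<Rightarrow> (d, -b, -c, a))"

definition principal_cong :: "int \<Rightarrow> imat set" where
  "principal_cong N = {(a,b,c,d) \<in> SL2Z. N dvd (a - 1) \<and> N dvd b \<and> N dvd c \<and> N dvd (d - 1)}"

definition congruence_subgroup :: "imat set \<Rightarrow> bool" where
  "congruence_subgroup \<Gamma> \<longleftrightarrow> \<Gamma> \<subseteq> SL2Z \<and> (1,0,0,1) \<in> \<Gamma> \<and>
     (\<forall>g\<in>\<Gamma>. \<forall>h\<in>\<Gamma>. mmul g h \<in> \<Gamma>) \<and> (\<forall>g\<in>\<Gamma>. minv g \<in> \<Gamma>) \<and>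
     (\<exists>N>0. principal_cong N \<subseteq> \<Gamma>)"

definition mob :: "rmat \<Rightarrow> complex \<Rightarrow> complex" where
  "mob g \<tau> = (case g of (a,b,c,d) \<Rightarrow>
     (complex_of_real a * \<tau> + complex_of_real b) / (complex_of_real c * \<tau> + complex_of_real d))"

definition upper :: "complex set" where "upper = {z. Im z > 0}"

definition holo_at_inf :: "(complex \<Rightarrow> complex) \<Rightarrow> bool" where
  "holo_at_inf f \<longleftrightarrow> (\<exists>N::nat. N > 0 \<and> (\<forall>\<tau>. Im \<tau> > 0 \<longrightarrow> f (\<tau> + of_nat N) = f \<tau>) \<and>
     (\<exists>u::int \<Rightarrow> complex. (\<forall>m<0. u m = 0) \<and>
        (\<forall>\<tau>. Im \<tau> > 0 \<longrightarrow>
           ((\<lambda>m. u m * exp (2 * of_real pi * \<i> * of_int m * \<tau> / of_nat N)) has_sum f \<tau>) UNIV)))"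

definition slash :: "int \<Rightarrow> imat \<Rightarrow> (complex \<Rightarrow> complex) \<Rightarrow> complex \<Rightarrow> complex" where
  "slash k g f = (\<lambda>\<tau>. case g of (a,b,c,d) \<Rightarrow>
      (of_int c * \<tau> + of_int d) powi (-k) * f (mob (of_intm g) \<tau>))"

text \<open>Holomorphic modular forms of weight k for \<Gamma>, as functions on the upper half plane
  (represented as functions on C vanishing off the upper half plane); M_k = 0 for k < 0.\<close>
definition MF :: "int \<Rightarrow> imat set \<Rightarrow> (complex \<Rightarrow> complex) set" where
  "MF k \<Gamma> = {f. (k < 0 \<longrightarrow> f = (\<lambda>_. 0)) \<and> f holomorphic_on upper \<and> (\<forall>z. Im z \<le> 0 \<longrightarrow> f z = 0) \<and>
      (\<forall>g\<in>\<Gamma>. \<forall>\<tau>. Im \<tau> > 0 \<longrightarrow>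
          f (mob (of_intm g) \<tau>) = (case g of (a,b,c,d) \<Rightarrow> (of_int c * \<tau> + of_int d) powi k) * f \<tau>) \<and>
      (\<forall>\<sigma>\<in>SL2Z. holo_at_inf (slash k \<sigma> f))}"

text \<open>A key (lambda, mu) is a pair of partitions, represented as multisets of positive naturals;
  a state assigns to each key the coefficient f_{lambda,mu}, a function on H (normalised to vanish
  off H).  The element is sum a_{-lambda} b_{-mu} f_{lambda,mu}(b).\<close>

type_synonym key = "nat multiset \<times> nat multiset"
type_synonym st = "key \<Rightarrow> complex \<Rightarrow> complex"

definition maskH :: "(complex \<Rightarrow> complex) \<Rightarrow> complex \<Rightarrow> complex" where
  "maskH f = (\<lambda>z. if Im z > 0 then f z else 0)"

definition mono :: "key \<Rightarrow> (complex \<Rightarrow> complex) \<Rightarrow> st" where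
  "mono k f = (\<lambda>k'. if k' = k then maskH f else (\<lambda>_. 0))"

definition supp :: "st \<Rightarrow> key set" where
  "supp s = {k. s k \<noteq> (\<lambda>_. 0)}"

definition Dch :: "st set" where
  "Dch = {s. finite (supp s) \<and> (\<forall>k\<in>supp s. 0 \<notin># fst k \<and> 0 \<notin># snd k) \<and>
            (\<forall>k. s k holomorphic_on upper \<and> (\<forall>z. Im z \<le> 0 \<longrightarrow> s k z = 0))}"

text \<open>linear extension of an operation defined on monomials\<close>
definition lift :: "(key \<Rightarrow> (complex \<Rightarrow> complex) \<Rightarrow> st) \<Rightarrow> st \<Rightarrow> st" where
  "lift F s = (\<lambda>k z. \<Sum>k'\<in>supp s. F k' (s k') k z)"

definition smul :: "complex \<Rightarrow> st \<Rightarrow> st" where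
  "smul c s = (\<lambda>k z. c * s k z)"

definition sadd :: "st \<Rightarrow> st \<Rightarrow> st" where
  "sadd s t = (\<lambda>k z. s k z + t k z)"

text \<open>Heisenberg modes: [a_m,b_n] = delta_{m,-n}; a_m 1 = 0 (m \<ge> 0), b_n 1 = 0 (n > 0),
  b_0 acts as multiplication by tau, a_0 as d/dtau.\<close>
definition amode_m :: "int \<Rightarrow> key \<Rightarrow> (complex \<Rightarrow> complex) \<Rightarrow> st" where
  "amode_m n k f = (case k of (l, m) \<Rightarrow>
     if n < 0 then mono (l + {#nat (-n)#}, m) f
     else if n = 0 then mono (l, m) (deriv f)
     else smul (of_nat (count m (nat n))) (mono (l, m - {#nat n#}) f))"

definition bmode_m :: "int \<Rightarrow> key \<Rightarrow> (complex \<Rightarrow> complex) \<Rightarrow> st" where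
  "bmode_m n k f = (case k of (l, m) \<Rightarrow>
     if n < 0 then mono (l, m + {#nat (-n)#}) f
     else if n = 0 then mono (l, m) (\<lambda>z. z * f z)
     else smul (- of_nat (count l (nat n))) (mono (l - {#nat n#}, m) f))"

definition amode :: "int \<Rightarrow> st \<Rightarrow> st" where "amode n = lift (amode_m n)"
definition bmode :: "int \<Rightarrow> st \<Rightarrow> st" where "bmode n = lift (bmode_m n)"

text \<open>multiplication by g(b_0)\<close>
definition multop :: "(complex \<Rightarrow> complex) \<Rightarrow> st \<Rightarrow> st" where
  "multop g = lift (\<lambda>k f. mono k (\<lambda>z. g z * f z))"

text \<open>Coefficient of z^N in Y(phi,z) = sum_i phi^(i)(b)/i! (sum_{n\<noteq>0} b_n z^{-n})^i, applied to s.
  (Only finitely many terms are nonzero on a given state.)\<close>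
definition Ycoef :: "(complex \<Rightarrow> complex) \<Rightarrow> int \<Rightarrow> st \<Rightarrow> st" where
  "Ycoef \<phi> N s = (\<lambda>k z. \<Sum>\<^sub>\<infinity>ms\<in>{ms::int list. (\<forall>m\<in>set ms. m \<noteq> 0) \<and> sum_list ms = - N}.
       multop ((deriv ^^ length ms) \<phi>) (foldr bmode ms s) k z / fact (length ms))"

text \<open>Coefficient of z^{n-1} in the normally ordered product :a(z) Y(h,z):.\<close>
definition NOcoef :: "(complex \<Rightarrow> complex) \<Rightarrow> int \<Rightarrow> st \<Rightarrow> st" where
  "NOcoef h n s = (\<lambda>k z. \<Sum>\<^sub>\<infinity>m\<in>(UNIV::int set).
       (if m < 0 then amode m (Ycoef h (n + m) s) else Ycoef h (n + m) (amode m s)) k z)"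

text \<open>pi(g) a_{-n} pi(g)^{-1}: the (-n)-th mode of Y(pi(g)a_{-1}, z), where
  pi(g) a_{-1} = a_{-1}(gamma b + delta)^2 + 2 gamma^2 b_{-1}.\<close>
definition Atr :: "rmat \<Rightarrow> nat \<Rightarrow> st \<Rightarrow> st" where
  "Atr g n s = (case g of (a,b,c,d) \<Rightarrow>
     sadd (NOcoef (\<lambda>\<tau>. (of_real c * \<tau> + of_real d)^2) (int n) s)
          (smul (2 * (of_real c)^2 * of_nat n) (bmode (- int n) s)))"

text \<open>pi(g) b_{-n} pi(g)^{-1}: the coefficient of z^n in Y(pi(g) b, z), pi(g) b = (alpha b+beta)/(gamma b+delta).\<close>
definition Btr :: "rmat \<Rightarrow> nat \<Rightarrow> st \<Rightarrow> st" where
  "Btr g n s = Ycoef (mob g) (int n) s"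

text \<open>pi(g)(a_{-lambda} b_{-mu} f(b)) = (pi(g)a_{-lambda}) (pi(g) b_{-mu}) f(g b).\<close>
definition pi_m :: "rmat \<Rightarrow> key \<Rightarrow> (complex \<Rightarrow> complex) \<Rightarrow> st" where
  "pi_m g k f = (case k of (l, m) \<Rightarrow>
     foldr (Atr g) (sorted_list_of_multiset l)
       (foldr (Btr g) (sorted_list_of_multiset m) (mono ({#}, {#}) (f \<circ> mob g))))"

definition piact :: "rmat \<Rightarrow> st \<Rightarrow> st" where
  "piact g = lift (pi_m g)"

definition plist :: "nat multiset \<Rightarrow> nat list" where
  "plist l = rev (sorted_list_of_multiset l)"

definition part_gt :: "nat multiset \<Rightarrow> nat multiset \<Rightarrow> bool" where
  "part_gt l l' \<longleftrightarrow> (let x = plist l; y = plist l' in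
     (\<exists>j < min (length x) (length y). take j x = take j y \<and> x ! j > y ! j) \<or>
     (length x > length y \<and> take (length y) x = y))"

definition lval :: "key \<Rightarrow> int" where
  "lval k = int (size (fst k)) - int (size (snd k))"

definition pair_gt :: "key \<Rightarrow> key \<Rightarrow> bool" where
  "pair_gt k k' \<longleftrightarrow> lval k > lval k' \<or> (lval k = lval k' \<and> part_gt (fst k) (fst k')) \<or>
     (fst k = fst k' \<and> size (snd k) = size (snd k') \<and> part_gt (snd k') (snd k))"

definition pair_le :: "key \<Rightarrow> key \<Rightarrow> bool" where
  "pair_le k k' \<longleftrightarrow> k = k' \<or> pair_gt k' k"

definition wt :: "key \<Rightarrow> nat" where
  "wt k = sum_mset (fst k) + sum_mset (snd k)"

definition is_partition :: "nat multiset \<Rightarrow> bool" where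
  "is_partition l \<longleftrightarrow> 0 \<notin># l"

definition Vfilt :: "key \<Rightarrow> st set" where
  "Vfilt k0 = {v \<in> Dch. \<forall>k\<in>supp v. pair_le k k0 \<and> wt k = wt k0}"

definition Vinv0 :: "imat set \<Rightarrow> key \<Rightarrow> st set" where
  "Vinv0 \<Gamma> k0 = {v \<in> Vfilt k0. (\<forall>g\<in>\<Gamma>. piact (of_intm g) v = v) \<and>
      (\<forall>\<rho>\<in>SL2Z. \<forall>k. holo_at_inf (piact (of_intm \<rho>) v k))}"

end

theory Submission
  imports Defs
begin

text \<open>
  Write l(\<lambda>, \<mu>) = p(\<lambda>) - p(\<mu>). Up to terms of smaller l, \<pi>(g) sends a_{-n} to
  (\<gamma>b + \<delta>)^2 a_{-n} and b_{-n} to b_{-n} / (\<gamma>b + \<delta>)^2, and f(b) to f(gb). Hence if every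
  monomial of v has l \<le> l(\<lambda>0, \<mu>0), the (\<lambda>0, \<mu>0)-coefficient of \<pi>(g) v is the slash of
  f = f_{\<lambda>0,\<mu>0} in weight 2(p(\<mu>0) - p(\<lambda>0)), and the \<Gamma>-invariance and the cusp
  conditions on v become those of a modular form on f.
  In negative weight -2e the function |f \<tau>| / (Im \<tau>)^e is \<Gamma>-invariant; as every \<tau> is an
  SL(2,Z)-translate of a point with Im \<ge> 1/2 and \<Gamma> has finite index, it is bounded, and the
  resulting bound |f \<tau>| \<le> C (Im \<tau>)^e forces the q-expansion of f to vanish by the maximum
  modulus principle. The description of the kernel is bookkeeping with the order on pairs.
\<close>

section \<open>The action of SL(2,Z) on the upper half plane\<close>

definition automorphy_factor :: "imat \<Rightarrow> complex \<Rightarrow> complex" where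
  "automorphy_factor g \<tau> = (case g of (a, b, c, d) \<Rightarrow> of_int c * \<tau> + of_int d)"

lemma slash_eq: "slash k g f \<tau> = automorphy_factor g \<tau> powi (- k) * f (mob (of_intm g) \<tau>)"
  by (cases g) (simp add: slash_def automorphy_factor_def)

lemma mob_of_intm:
  "mob (of_intm (a, b, c, d)) \<tau> = (of_int a * \<tau> + of_int b) / automorphy_factor (a, b, c, d) \<tau>"
  by (simp add: mob_def of_intm_def automorphy_factor_def)

lemma SL2Z_iff: "(a, b, c, d) \<in> SL2Z \<longleftrightarrow> a * d - b * c = 1"
  by (simp add: SL2Z_def)

lemma automorphy_factor_nonzero:
  assumes "g \<in> SL2Z" "0 < Im \<tau>"
  shows "automorphy_factor g \<tau> \<noteq> 0"
proof
  obtain a b c d where g: "g = (a, b, c, d)"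
    by (cases g)
  assume j: "automorphy_factor g \<tau> = 0"
  then have "Im (of_int c * \<tau> + of_int d) = 0"
    by (simp add: automorphy_factor_def g)
  then have "real_of_int c * Im \<tau> = 0"
    by simp
  then have "c = 0"
    using assms(2) by simp
  moreover have "d = 0"
    using j calculation by (simp add: automorphy_factor_def g)
  ultimately show False
    using assms(1) by (simp add: g SL2Z_iff)
qed

lemma deriv_mob:
  assumes "g \<in> SL2Z" "0 < Im \<tau>"
  shows "deriv (mob (of_intm g)) \<tau> = 1 / automorphy_factor g \<tau> ^ 2"
proof -
  obtain a b c d where g: "g = (a, b, c, d)"
    by (cases g)
  let ?j = "\<lambda>\<tau>. of_int c * \<tau> + of_int d :: complex"
  have j: "?j \<tau> \<noteq> 0"
    using automorphy_factor_nonzero[OF assms] by (simp add: automorphy_factor_def g)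
  have det: "of_int a * of_int d - of_int b * of_int c = (1 :: complex)"
    using assms(1) by (simp add: g SL2Z_iff flip: of_int_mult of_int_diff)
  have "((\<lambda>\<tau>. (of_int a * \<tau> + of_int b) / ?j \<tau>) has_field_derivative
      (of_int a * ?j \<tau> - (of_int a * \<tau> + of_int b) * of_int c) / ?j \<tau> ^ 2) (at \<tau>)"
    using j by (auto intro!: derivative_eq_intros simp: power2_eq_square)
  moreover have "of_int a * ?j \<tau> - (of_int a * \<tau> + of_int b) * of_int c = 1"
    using det by (simp add: algebra_simps)
  moreover have "mob (of_intm g) = (\<lambda>\<tau>. (of_int a * \<tau> + of_int b) / ?j \<tau>)"
    by (simp add: g mob_def of_intm_def fun_eq_iff)
  ultimately show ?thesis
    by (intro DERIV_imp_deriv) (simp add: automorphy_factor_def g)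
qed

lemma mmul_SL2Z:
  assumes "g \<in> SL2Z" "h \<in> SL2Z"
  shows "mmul g h \<in> SL2Z"
proof -
  obtain a b c d a' b' c' d' where g: "g = (a, b, c, d)" and h: "h = (a', b', c', d')"
    by (cases g; cases h)
  have "(a*a' + b*c') * (c*b' + d*d') - (a*b' + b*d') * (c*a' + d*c') = (a*d - b*c) * (a'*d' - b'*c')"
    by (simp add: algebra_simps)
  then show ?thesis
    using assms by (simp add: g h SL2Z_iff mmul_def)
qed

lemma minv_SL2Z: "g \<in> SL2Z \<Longrightarrow> minv g \<in> SL2Z"
  by (cases g) (simp add: SL2Z_iff minv_def algebra_simps)

lemma mmul_assoc: "mmul (mmul g h) k = mmul g (mmul h k)"
  by (cases g; cases h; cases k) (simp add: mmul_def algebra_simps)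

lemma mmul_minv_left: "g \<in> SL2Z \<Longrightarrow> mmul (minv g) g = (1, 0, 0, 1)"
  by (cases g) (simp add: SL2Z_iff mmul_def minv_def algebra_simps)

lemma mmul_right_id: "mmul g (1, 0, 0, 1) = g"
  by (cases g) (simp add: mmul_def)

lemma Im_mob:
  assumes "g \<in> SL2Z"
  shows "Im (mob (of_intm g) \<tau>) = Im \<tau> / (cmod (automorphy_factor g \<tau>))^2"
proof -
  obtain a b c d where g: "g = (a, b, c, d)"
    by (cases g)
  let ?x = "Re \<tau>" and ?y = "Im \<tau>"
  have "Im (mob (of_intm g) \<tau>) =
      (a * ?y * (c * ?x + d) - (a * ?x + b) * (c * ?y)) / (cmod (automorphy_factor g \<tau>))^2"
    by (simp add: mob_of_intm g automorphy_factor_def Im_divide cmod_power2 algebra_simps)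
  also have "a * ?y * (c * ?x + d) - (a * ?x + b) * (c * ?y) = (a * d - b * c) * ?y"
    by (simp add: algebra_simps)
  finally show ?thesis
    using assms by (simp add: g SL2Z_iff flip: of_int_mult of_int_diff)
qed

lemma Im_mob_pos: "g \<in> SL2Z \<Longrightarrow> 0 < Im \<tau> \<Longrightarrow> 0 < Im (mob (of_intm g) \<tau>)"
  using Im_mob automorphy_factor_nonzero by simp

lemma mob_mmul:
  assumes "h \<in> SL2Z" "0 < Im \<tau>"
  shows "mob (of_intm (mmul g h)) \<tau> = mob (of_intm g) (mob (of_intm h) \<tau>)"
proof -
  obtain a b c d a' b' c' d' where g: "g = (a, b, c, d)" and h: "h = (a', b', c', d')"
    by (cases g; cases h)
  define X where "X = of_int a' * \<tau> + of_int b'"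
  define Y where "Y = of_int c' * \<tau> + of_int d'"
  have Y: "Y \<noteq> 0"
    using automorphy_factor_nonzero[OF assms] by (simp add: h automorphy_factor_def Y_def)
  have "mob (of_intm g) (mob (of_intm h) \<tau>) =
      (of_int a * (X / Y) + of_int b) / (of_int c * (X / Y) + of_int d)"
    by (simp add: mob_of_intm g h automorphy_factor_def X_def Y_def)
  also have "\<dots> = ((of_int a * X + of_int b * Y) / Y) / ((of_int c * X + of_int d * Y) / Y)"
    using Y by (simp add: add_divide_distrib)
  also have "\<dots> = (of_int a * X + of_int b * Y) / (of_int c * X + of_int d * Y)"
    using Y by simp
  also have "\<dots> = mob (of_intm (mmul g h)) \<tau>"
    by (simp add: mob_of_intm g h mmul_def automorphy_factor_def X_def Y_def algebra_simps)
  finally show ?thesis ..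
qed

lemma mob_minv:
  assumes "g \<in> SL2Z" "0 < Im \<tau>"
  shows "mob (of_intm (minv g)) (mob (of_intm g) \<tau>) = \<tau>"
  using mob_mmul[OF assms, of "minv g"] mmul_minv_left[OF assms(1)]
  by (simp add: mob_def of_intm_def)

lemma slash_invariant_iff:
  assumes "g \<in> SL2Z" "0 < Im \<tau>"
  shows "slash k g f \<tau> = f \<tau> \<longleftrightarrow>
    f (mob (of_intm g) \<tau>) = (case g of (a, b, c, d) \<Rightarrow> (of_int c * \<tau> + of_int d) powi k) * f \<tau>"
  using automorphy_factor_nonzero[OF assms]
  by (cases g) (auto simp: slash_eq automorphy_factor_def power_int_minus field_simps)

section \<open>Supports of states\<close>

definition partition_key :: "key \<Rightarrow> bool" where
  "partition_key k \<longleftrightarrow> is_partition (fst k) \<and> is_partition (snd k)"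

text \<open>The weight bound W only serves to keep supports finite, as \<open>lift\<close> needs
  (a sum over an infinite set is 0); the content is the bound L on \<open>lval\<close>.\<close>

definition bounded_keys :: "int \<Rightarrow> int \<Rightarrow> key set" where
  "bounded_keys W L = {k. partition_key k \<and> int (wt k) \<le> W \<and> lval k \<le> L}"

lemma bounded_keys_mono: "W \<le> W' \<Longrightarrow> L \<le> L' \<Longrightarrow> bounded_keys W L \<subseteq> bounded_keys W' L'"
  by (auto simp: bounded_keys_def)

lemma size_le_sum_mset_partition: "is_partition l \<Longrightarrow> size l \<le> sum_mset l"
proof (induction l)
  case (add x l)
  then show ?case by (cases x) (auto simp: is_partition_def)
qed simp

lemma finite_partitions_sum_le: "finite {l. is_partition l \<and> sum_mset l \<le> W}"
proof (rule finite_subset)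
  show "{l. is_partition l \<and> sum_mset l \<le> W} \<subseteq> (\<Union>n\<le>W. multisets_of_size {1..W} n)"
  proof safe
    fix l assume l: "is_partition l" "sum_mset l \<le> W"
    have "set_mset l \<subseteq> {1..W}"
      using l by (auto simp: is_partition_def Suc_le_eq dest!: multi_member_split)
    moreover have "size l \<le> W"
      using size_le_sum_mset_partition[OF l(1)] l(2) by linarith
    ultimately show "l \<in> (\<Union>n\<le>W. multisets_of_size {1..W} n)"
      by (auto simp: multisets_of_size_def)
  qed
qed auto

lemma finite_bounded_keys: "finite (bounded_keys W L)"
proof (rule finite_subset)
  let ?P = "{l. is_partition l \<and> sum_mset l \<le> nat W}"
  show "bounded_keys W L \<subseteq> ?P \<times> ?P"
    by (auto simp: bounded_keys_def partition_key_def wt_def simp del: of_nat_sum_mset)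
  show "finite (?P \<times> ?P)"
    using finite_partitions_sum_le by blast
qed

lemma supp_lift: "supp (lift F s) \<subseteq> (\<Union>k\<in>supp s. supp (F k (s k)))"
proof
  fix k assume "k \<in> supp (lift F s)"
  then obtain z where "lift F s k z \<noteq> 0"
    unfolding supp_def by blast
  then obtain k' where "k' \<in> supp s" "F k' (s k') k z \<noteq> 0"
    unfolding lift_def by (meson sum.neutral)
  then have "k' \<in> supp s" "F k' (s k') k \<noteq> (\<lambda>_. 0)"
    by auto
  then show "k \<in> (\<Union>k\<in>supp s. supp (F k (s k)))"
    unfolding supp_def by blast
qed

lemma supp_infsum:
  "supp (\<lambda>k z. \<Sum>\<^sub>\<infinity>i\<in>I. \<Phi> i k z) \<subseteq> {k. \<exists>i\<in>I. \<Phi> i k \<noteq> (\<lambda>_. 0)}"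
proof
  fix k assume "k \<in> supp (\<lambda>k z. \<Sum>\<^sub>\<infinity>i\<in>I. \<Phi> i k z)"
  then obtain z where "(\<Sum>\<^sub>\<infinity>i\<in>I. \<Phi> i k z) \<noteq> 0"
    by (auto simp: supp_def)
  then obtain i where "i \<in> I" "\<Phi> i k z \<noteq> 0"
    using infsum_0 by meson
  then show "k \<in> {k. \<exists>i\<in>I. \<Phi> i k \<noteq> (\<lambda>_. 0)}"
    by (force simp: fun_eq_iff)
qed

lemma Dch_component: "v \<in> Dch \<Longrightarrow> v k holomorphic_on upper \<and> (\<forall>z. Im z \<le> 0 \<longrightarrow> v k z = 0)"
  unfolding Dch_def by blast

lemma Dch_supp_partition_key: "v \<in> Dch \<Longrightarrow> k \<in> supp v \<Longrightarrow> partition_key k"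
  unfolding Dch_def partition_key_def is_partition_def by blast

lemma supp_mono: "supp (mono k f) \<subseteq> {k}"
  by (auto simp: supp_def mono_def)

lemma supp_smul: "supp (smul c s) \<subseteq> supp s"
  by (auto simp: supp_def smul_def)

lemma supp_sadd: "supp (sadd s t) \<subseteq> supp s \<union> supp t"
  by (auto simp: supp_def sadd_def)

lemma supp_multop: "supp (multop g s) \<subseteq> supp s"
  unfolding multop_def using supp_lift[of _ s] supp_mono by fastforce

lemma supp_Ycoef:
  "supp (Ycoef \<phi> N s) \<subseteq>
     (\<Union>ms\<in>{ms. (\<forall>m\<in>set ms. m \<noteq> 0) \<and> sum_list ms = - N}. supp (foldr bmode ms s))"
proof -
  have "k \<in> supp (foldr bmode ms s)"
    if "(\<lambda>z. multop ((deriv ^^ length ms) \<phi>) (foldr bmode ms s) k z / fact (length ms)) \<noteq> (\<lambda>_. 0)"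
    for ms k
  proof -
    from that have "k \<in> supp (multop ((deriv ^^ length ms) \<phi>) (foldr bmode ms s))"
      by (auto simp: supp_def)
    then show ?thesis
      using supp_multop by blast
  qed
  then show ?thesis
    unfolding Ycoef_def by (intro order.trans[OF supp_infsum]) blast
qed

lemma supp_NOcoef:
  "supp (NOcoef h n s) \<subseteq>
     (\<Union>m. supp (if m < 0 then amode m (Ycoef h (n + m) s) else Ycoef h (n + m) (amode m s)))"
  unfolding NOcoef_def by (rule order.trans[OF supp_infsum]) (unfold supp_def, blast)

lemma supp_amode_m:
  assumes "k' \<in> supp (amode_m n k f)" "k \<in> bounded_keys W L"
  shows "k' \<in> bounded_keys (W - n) (L + 1)"
proof -
  obtain l m where k: "k = (l, m)"
    by (cases k)
  consider "n < 0" "k' = (add_mset (nat (- n)) l, m)" | "n = 0" "k' = (l, m)"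
    | "n > 0" "nat n \<in># m" "k' = (l, m - {#nat n#})"
    using assms(1) by (cases "nat n \<in># m") (auto simp: amode_m_def k supp_def mono_def smul_def
        not_in_iff split: if_splits)
  then show ?thesis
  proof cases
    case 3
    then obtain m' where "m = add_mset (nat n) m'" "k' = (l, m')"
      by (auto dest!: multi_member_split)
    then show ?thesis
      using 3 assms(2) by (auto simp: k bounded_keys_def partition_key_def is_partition_def
          wt_def lval_def simp del: of_nat_sum_mset)
  qed (use assms(2) in \<open>auto simp: k bounded_keys_def partition_key_def is_partition_def
          wt_def lval_def simp del: of_nat_sum_mset\<close>)
qed

lemma supp_bmode_m:
  assumes "k' \<in> supp (bmode_m n k f)" "k \<in> bounded_keys W L" "n \<noteq> 0"
  shows "k' \<in> bounded_keys (W - n) (L - 1)"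
proof -
  obtain l m where k: "k = (l, m)"
    by (cases k)
  consider "n < 0" "k' = (l, add_mset (nat (- n)) m)" | "n > 0" "nat n \<in># l" "k' = (l - {#nat n#}, m)"
    using assms(1,3) by (cases "nat n \<in># l") (auto simp: bmode_m_def k supp_def mono_def smul_def
        not_in_iff split: if_splits)
  then show ?thesis
  proof cases
    case 2
    then obtain l' where "l = add_mset (nat n) l'" "k' = (l', m)"
      by (auto dest!: multi_member_split)
    then show ?thesis
      using 2 assms(2) by (auto simp: k bounded_keys_def partition_key_def is_partition_def
          wt_def lval_def simp del: of_nat_sum_mset)
  qed (use assms(2) in \<open>auto simp: k bounded_keys_def partition_key_def is_partition_def
          wt_def lval_def simp del: of_nat_sum_mset\<close>)
qed

lemma supp_amode: "supp s \<subseteq> bounded_keys W L \<Longrightarrow> supp (amode n s) \<subseteq> bounded_keys (W - n) (L + 1)"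
  unfolding amode_def using supp_lift[of "amode_m n" s] supp_amode_m by blast

lemma supp_bmode:
  "supp s \<subseteq> bounded_keys W L \<Longrightarrow> n \<noteq> 0 \<Longrightarrow> supp (bmode n s) \<subseteq> bounded_keys (W - n) (L - 1)"
  unfolding bmode_def using supp_lift[of "bmode_m n" s] supp_bmode_m by blast

lemma supp_foldr_bmode:
  assumes "\<forall>m\<in>set ms. m \<noteq> 0" "supp s \<subseteq> bounded_keys W L"
  shows "supp (foldr bmode ms s) \<subseteq> bounded_keys (W - sum_list ms) (L - length ms)"
  using assms(1)
proof (induction ms)
  case (Cons m ms)
  then have "supp (bmode m (foldr bmode ms s)) \<subseteq> bounded_keys (W - sum_list ms - m) (L - length ms - 1)"
    by (intro supp_bmode) auto
  then show ?case
    by (simp add: algebra_simps)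
qed (use assms(2) in simp)

lemma supp_Ycoef_bounded:
  assumes "supp s \<subseteq> bounded_keys W L"
  shows "supp (Ycoef \<phi> N s) \<subseteq> bounded_keys (W + N) (L - of_bool (N \<noteq> 0))"
proof -
  have "supp (foldr bmode ms s) \<subseteq> bounded_keys (W + N) (L - of_bool (N \<noteq> 0))"
    if ms: "\<forall>m\<in>set ms. m \<noteq> 0" "sum_list ms = - N" for ms
  proof -
    have "N \<noteq> 0 \<Longrightarrow> length ms \<ge> 1"
      using ms(2) by (cases ms) auto
    then have "bounded_keys (W - sum_list ms) (L - length ms) \<subseteq> bounded_keys (W + N) (L - of_bool (N \<noteq> 0))"
      using ms(2) by (intro bounded_keys_mono) auto
    then show ?thesis
      using supp_foldr_bmode[OF ms(1) assms] by blast
  qed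
  then show ?thesis
    using supp_Ycoef[of \<phi> N s] by blast
qed

lemma supp_NOcoef_bounded:
  assumes "supp s \<subseteq> bounded_keys W L"
  shows "supp (NOcoef h n s) \<subseteq> bounded_keys (W + n) (L + 1)"
proof -
  have "supp (if m < 0 then amode m (Ycoef h (n + m) s) else Ycoef h (n + m) (amode m s))
      \<subseteq> bounded_keys (W + n) (L + 1)" for m
  proof (cases "m < 0")
    case True
    have "supp (amode m (Ycoef h (n + m) s))
        \<subseteq> bounded_keys (W + (n + m) - m) (L - of_bool (n + m \<noteq> 0) + 1)"
      by (intro supp_amode supp_Ycoef_bounded assms)
    also have "\<dots> \<subseteq> bounded_keys (W + n) (L + 1)"
      by (rule bounded_keys_mono) auto
    finally show ?thesis
      using True by simp
  next
    case False
    have "supp (Ycoef h (n + m) (amode m s))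
        \<subseteq> bounded_keys (W - m + (n + m)) (L + 1 - of_bool (n + m \<noteq> 0))"
      by (intro supp_Ycoef_bounded supp_amode assms)
    also have "\<dots> \<subseteq> bounded_keys (W + n) (L + 1)"
      by (rule bounded_keys_mono) auto
    finally show ?thesis
      using False by simp
  qed
  then show ?thesis
    using supp_NOcoef[of h n s] by blast
qed

lemma supp_Atr:
  assumes "supp s \<subseteq> bounded_keys W L" "n > 0"
  shows "supp (Atr g n s) \<subseteq> bounded_keys (W + n) (L + 1)"
proof -
  obtain a b c d where g: "g = (a, b, c, d)"
    by (cases g)
  have "supp (bmode (- int n) s) \<subseteq> bounded_keys (W - - int n) (L - 1)"
    using assms by (intro supp_bmode) auto
  also have "\<dots> \<subseteq> bounded_keys (W + n) (L + 1)"
    by (rule bounded_keys_mono) auto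
  finally have "supp (smul x (bmode (- int n) s)) \<subseteq> bounded_keys (W + n) (L + 1)" for x
    using supp_smul by blast
  then show ?thesis
    unfolding Atr_def g prod.case
    using supp_NOcoef_bounded[OF assms(1)] by (intro order.trans[OF supp_sadd] Un_least)
qed

lemma supp_Btr:
  "supp s \<subseteq> bounded_keys W L \<Longrightarrow> n > 0 \<Longrightarrow> supp (Btr g n s) \<subseteq> bounded_keys (W + n) (L - 1)"
  unfolding Btr_def using supp_Ycoef_bounded[of s W L "mob g" "int n"] by simp

section \<open>Leading components\<close>

lemma finite_supp_if_bounded: "supp s \<subseteq> bounded_keys W L \<Longrightarrow> finite (supp s)"
  using finite_bounded_keys finite_subset by blast

lemma apply_eq_0_if_lval_gt:
  assumes "supp s \<subseteq> bounded_keys W L" "L < lval k"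
  shows "s k z = 0"
proof -
  have "k \<notin> supp s"
    using assms by (auto simp: bounded_keys_def)
  then show ?thesis
    by (simp add: supp_def)
qed

lemma lift_mono_relabel:
  assumes "finite (supp s)" "T (\<lambda>_. 0) = (\<lambda>_. 0)" "\<And>k'. \<sigma> k' = k \<longleftrightarrow> P \<and> k' = k0"
  shows "lift (\<lambda>k f. mono (\<sigma> k) (T f)) s k z = (if P then maskH (T (s k0)) z else 0)"
proof -
  have "lift (\<lambda>k f. mono (\<sigma> k) (T f)) s k z =
      (\<Sum>k'\<in>supp s. if P \<and> k' = k0 then maskH (T (s k0)) z else 0)"
    unfolding lift_def
  proof (intro sum.cong refl)
    fix k'
    have "k = \<sigma> k' \<longleftrightarrow> P \<and> k' = k0"
      using assms(3)[of k'] by blast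
    then show "mono (\<sigma> k') (T (s k')) k z = (if P \<and> k' = k0 then maskH (T (s k0)) z else 0)"
      by (simp add: mono_def)
  qed
  also have "\<dots> = (if P \<and> k0 \<in> supp s then maskH (T (s k0)) z else 0)"
    using assms(1) by (cases P) simp_all
  also have "\<dots> = (if P then maskH (T (s k0)) z else 0)"
    using assms(2) by (auto simp: supp_def maskH_def)
  finally show ?thesis .
qed

lemma multop_apply:
  assumes "finite (supp s)" "0 < Im z"
  shows "multop g s k z = g z * s k z"
  unfolding multop_def using lift_mono_relabel[OF assms(1), of "\<lambda>f z. g z * f z" id k True k]
    assms(2) by (simp add: maskH_def)

lemma amode_neg_apply:
  assumes "finite (supp s)" "n > 0" "0 < Im z"
  shows "amode (- int n) s k z = (if n \<in># fst k then s (fst k - {#n#}, snd k) z else 0)"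
proof -
  have "amode_m (- int n) = (\<lambda>k f. mono (add_mset n (fst k), snd k) (id f))"
    using assms(2) by (auto simp: amode_m_def fun_eq_iff split: prod.split)
  moreover have "(add_mset n (fst k'), snd k') = k \<longleftrightarrow> n \<in># fst k \<and> k' = (fst k - {#n#}, snd k)" for k'
    by (cases k; cases k') (auto simp: diff_single_eq_union)
  ultimately show ?thesis
    unfolding amode_def using lift_mono_relabel[OF assms(1)] assms(3) by (simp add: maskH_def)
qed

lemma bmode_neg_apply:
  assumes "finite (supp s)" "n > 0" "0 < Im z"
  shows "bmode (- int n) s k z = (if n \<in># snd k then s (fst k, snd k - {#n#}) z else 0)"
proof -
  have "bmode_m (- int n) = (\<lambda>k f. mono (fst k, add_mset n (snd k)) (id f))"
    using assms(2) by (auto simp: bmode_m_def fun_eq_iff split: prod.split)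
  moreover have "(fst k', add_mset n (snd k')) = k \<longleftrightarrow> n \<in># snd k \<and> k' = (fst k, snd k - {#n#})" for k'
    by (cases k; cases k') (auto simp: diff_single_eq_union)
  ultimately show ?thesis
    unfolding bmode_def using lift_mono_relabel[OF assms(1)] assms(3) by (simp add: maskH_def)
qed

lemma Ycoef_top:
  assumes "supp s \<subseteq> bounded_keys W L" "L - 1 \<le> lval k"
  shows "Ycoef \<phi> N s k z =
    (if N = 0 then multop \<phi> s k z else multop (deriv \<phi>) (bmode (- N) s) k z)"
proof -
  let ?I = "{ms. (\<forall>m\<in>set ms. m \<noteq> 0) \<and> sum_list ms = - N}"
  let ?J = "if N = 0 then {[]} else {[- N]}"
  let ?t = "\<lambda>ms. multop ((deriv ^^ length ms) \<phi>) (foldr bmode ms s) k z / fact (length ms)"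
  have "?t ms = 0" if "ms \<in> ?I - ?J" for ms
  proof -
    have "length ms \<ge> 2"
      using that by (cases ms rule: remdups_adj.cases) auto
    have "supp (multop ((deriv ^^ length ms) \<phi>) (foldr bmode ms s))
        \<subseteq> bounded_keys (W - sum_list ms) (L - length ms)"
      using supp_multop supp_foldr_bmode[OF _ assms(1)] that by blast
    moreover have "L - length ms < lval k"
      using assms(2) \<open>length ms \<ge> 2\<close> by linarith
    ultimately show ?thesis
      by (simp add: apply_eq_0_if_lval_gt)
  qed
  then have "infsum ?t ?I = infsum ?t ?J"
    by (intro infsum_cong_neutral) (auto split: if_splits)
  then show ?thesis
    unfolding Ycoef_def by simp
qed

lemma NOcoef_top:
  assumes "supp s \<subseteq> bounded_keys W L" "L + 1 \<le> lval k" "n > 0"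
  shows "NOcoef h (int n) s k z = amode (- int n) (Ycoef h 0 s) k z"
proof -
  let ?t = "\<lambda>m. (if m < 0 then amode m (Ycoef h (int n + m) s) else Ycoef h (int n + m) (amode m s)) k z"
  have "?t m = 0" if "m \<noteq> - int n" for m
  proof -
    have "supp (amode m (Ycoef h (int n + m) s)) \<subseteq> bounded_keys (W + (n + m) - m) (L - 1 + 1)"
      using that by (intro supp_amode order.trans[OF supp_Ycoef_bounded[OF assms(1)]] bounded_keys_mono)
        auto
    moreover have "supp (Ycoef h (int n + m) (amode m s)) \<subseteq> bounded_keys (W - m + (n + m)) (L + 1 - 1)"
      using that by (intro order.trans[OF supp_Ycoef_bounded[OF supp_amode[OF assms(1)]]]
          bounded_keys_mono) auto
    ultimately show ?thesis
      using assms(2) by (auto simp: apply_eq_0_if_lval_gt)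
  qed
  then have "infsum ?t UNIV = infsum ?t {- int n}"
    by (intro infsum_cong_neutral) auto
  then show ?thesis
    unfolding NOcoef_def using assms(3) by simp
qed

lemma Atr_top:
  assumes "supp s \<subseteq> bounded_keys W L" "L + 1 \<le> lval k" "n > 0" "0 < Im z"
  shows "Atr (a, b, c, d) n s k z =
    (if n \<in># fst k then (of_real c * z + of_real d)^2 * s (fst k - {#n#}, snd k) z else 0)"
proof -
  let ?h = "\<lambda>z. (of_real c * z + of_real d)^2"
  have "supp (bmode (- int n) s) \<subseteq> bounded_keys (W + n) (L - 1)"
    using supp_bmode[OF assms(1), of "- int n"] assms(3) by simp
  then have "bmode (- int n) s k z = 0"
    using assms(2) by (simp add: apply_eq_0_if_lval_gt)
  then have "Atr (a, b, c, d) n s k z = amode (- int n) (Ycoef ?h 0 s) k z"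
    using NOcoef_top[OF assms(1-3)] by (simp add: Atr_def sadd_def smul_def)
  also have "\<dots> = (if n \<in># fst k then Ycoef ?h 0 s (fst k - {#n#}, snd k) z else 0)"
    using amode_neg_apply finite_supp_if_bounded[OF supp_Ycoef_bounded[OF assms(1)]] assms(3,4)
    by blast
  also have "\<dots> = (if n \<in># fst k then ?h z * s (fst k - {#n#}, snd k) z else 0)"
  proof (cases "n \<in># fst k")
    case True
    then have "L - 1 \<le> lval (fst k - {#n#}, snd k)"
      using assms(2) by (cases k) (auto simp: lval_def size_Diff_singleton)
    then show ?thesis
      using Ycoef_top[OF assms(1)] multop_apply[OF finite_supp_if_bounded[OF assms(1)] assms(4)]
      by simp
  qed simp
  finally show ?thesis .
qed

lemma Btr_top:
  assumes "supp s \<subseteq> bounded_keys W L" "L - 1 \<le> lval k" "n > 0" "0 < Im z"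
  shows "Btr g n s k z = deriv (mob g) z * (if n \<in># snd k then s (fst k, snd k - {#n#}) z else 0)"
proof -
  have "supp (bmode (- int n) s) \<subseteq> bounded_keys (W + n) (L - 1)"
    using supp_bmode[OF assms(1), of "- int n"] assms(3) by simp
  then have "Btr g n s k z = deriv (mob g) z * bmode (- int n) s k z"
    using Ycoef_top[OF assms(1,2)] multop_apply[OF finite_supp_if_bounded assms(4)] assms(3)
    by (simp add: Btr_def)
  then show ?thesis
    using bmode_neg_apply[OF finite_supp_if_bounded[OF assms(1)] assms(3,4)] by simp
qed

lemma supp_foldr_Btr:
  assumes "\<forall>n\<in>set ms. n > 0" "supp s \<subseteq> bounded_keys W L"
  shows "supp (foldr (Btr g) ms s) \<subseteq> bounded_keys (W + int (sum_list ms)) (L - int (length ms))"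
  using assms(1)
proof (induction ms)
  case (Cons n ms)
  then have "supp (Btr g n (foldr (Btr g) ms s))
      \<subseteq> bounded_keys (W + int (sum_list ms) + n) (L - int (length ms) - 1)"
    by (intro supp_Btr) auto
  then show ?case
    by (simp add: algebra_simps)
qed (use assms(2) in simp)

lemma supp_foldr_Atr:
  assumes "\<forall>n\<in>set ls. n > 0" "supp s \<subseteq> bounded_keys W L"
  shows "supp (foldr (Atr g) ls s) \<subseteq> bounded_keys (W + int (sum_list ls)) (L + int (length ls))"
  using assms(1)
proof (induction ls)
  case (Cons n ls)
  then have "supp (Atr g n (foldr (Atr g) ls s))
      \<subseteq> bounded_keys (W + int (sum_list ls) + n) (L + int (length ls) + 1)"
    by (intro supp_Atr) auto
  then show ?case
    by (simp add: algebra_simps)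
qed (use assms(2) in simp)

lemma foldr_Btr_top:
  assumes "\<forall>n\<in>set ms. n > 0" "supp s \<subseteq> bounded_keys W L"
    and top: "\<And>k z. 0 < Im z \<Longrightarrow> L \<le> lval k \<Longrightarrow> s k z = (if k = (l0, m0) then V z else 0)"
  shows "0 < Im z \<Longrightarrow> L - int (length ms) \<le> lval k \<Longrightarrow> foldr (Btr g) ms s k z =
    (if k = (l0, m0 + mset ms) then deriv (mob g) z ^ length ms * V z else 0)"
  using assms(1)
proof (induction ms arbitrary: k)
  case (Cons n ms)
  let ?s = "foldr (Btr g) ms s"
  have "supp ?s \<subseteq> bounded_keys (W + int (sum_list ms)) (L - int (length ms))"
    using supp_foldr_Btr Cons.prems(3) assms(2) by auto
  then have "foldr (Btr g) (n # ms) s k z =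
      deriv (mob g) z * (if n \<in># snd k then ?s (fst k, snd k - {#n#}) z else 0)"
    using Btr_top Cons.prems by simp
  also have "\<dots> = deriv (mob g) z * (if n \<in># snd k \<and> (fst k, snd k - {#n#}) = (l0, m0 + mset ms)
      then deriv (mob g) z ^ length ms * V z else 0)"
  proof (cases "n \<in># snd k")
    case True
    then have "L - int (length ms) \<le> lval (fst k, snd k - {#n#})"
      using Cons.prems(2) by (cases k) (auto simp: lval_def dest!: multi_member_split)
    then show ?thesis
      using Cons.IH Cons.prems True by simp
  qed simp
  also have "n \<in># snd k \<and> (fst k, snd k - {#n#}) = (l0, m0 + mset ms) \<longleftrightarrow>
      k = (l0, m0 + mset (n # ms))"
    by (cases k) (auto simp: diff_single_eq_union)
  finally show ?case
    by simp
qed (use top in simp)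

lemma foldr_Atr_top:
  assumes "\<forall>n\<in>set ls. n > 0" "supp s \<subseteq> bounded_keys W L"
    and top: "\<And>k z. 0 < Im z \<Longrightarrow> L \<le> lval k \<Longrightarrow> s k z = (if k = (l0, m0) then V z else 0)"
  shows "0 < Im z \<Longrightarrow> L + int (length ls) \<le> lval k \<Longrightarrow> foldr (Atr (a, b, c, d)) ls s k z =
    (if k = (l0 + mset ls, m0) then ((of_real c * z + of_real d)^2) ^ length ls * V z else 0)"
  using assms(1)
proof (induction ls arbitrary: k)
  case (Cons n ls)
  let ?s = "foldr (Atr (a, b, c, d)) ls s" and ?h = "(of_real c * z + of_real d)^2"
  have "supp ?s \<subseteq> bounded_keys (W + int (sum_list ls)) (L + int (length ls))"
    using supp_foldr_Atr Cons.prems(3) assms(2) by auto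
  then have "foldr (Atr (a, b, c, d)) (n # ls) s k z =
      (if n \<in># fst k then ?h * ?s (fst k - {#n#}, snd k) z else 0)"
    using Atr_top Cons.prems by simp
  also have "\<dots> = (if n \<in># fst k \<and> (fst k - {#n#}, snd k) = (l0 + mset ls, m0)
      then ?h * (?h ^ length ls * V z) else 0)"
  proof (cases "n \<in># fst k")
    case True
    then have "L + int (length ls) \<le> lval (fst k - {#n#}, snd k)"
      using Cons.prems(2) by (cases k) (auto simp: lval_def size_Diff_singleton)
    then show ?thesis
      using Cons.IH Cons.prems True by simp
  qed simp
  also have "n \<in># fst k \<and> (fst k - {#n#}, snd k) = (l0 + mset ls, m0) \<longleftrightarrow>
      k = (l0 + mset (n # ls), m0)"
    by (cases k) (auto simp: diff_single_eq_union)
  finally show ?case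
    by simp
qed (use top in simp)

lemma pi_m_top:
  assumes "partition_key (l, m)" "0 < Im z" "lval (l, m) \<le> lval k"
  shows "pi_m (a, b, c, d) (l, m) f k z = (if k = (l, m) then
      ((of_real c * z + of_real d)^2) ^ size l * deriv (mob (a, b, c, d)) z ^ size m *
      f (mob (a, b, c, d) z)
    else 0)"
proof -
  let ?g = "(a, b, c, d)"
  let ?ls = "sorted_list_of_multiset l" and ?ms = "sorted_list_of_multiset m"
  let ?s0 = "mono ({#}, {#}) (f \<circ> mob ?g)"
  let ?sB = "foldr (Btr ?g) ?ms ?s0"
  have pos: "\<forall>n\<in>set ?ls. n > 0" "\<forall>n\<in>set ?ms. n > 0"
    using assms(1) by (auto simp: partition_key_def is_partition_def intro: gr0I)
  have len: "length ?ls = size l" "length ?ms = size m"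
    by (metis mset_sorted_list_of_multiset size_mset)+
  have supp0: "supp ?s0 \<subseteq> bounded_keys 0 0"
    using supp_mono by (fastforce simp: bounded_keys_def partition_key_def is_partition_def wt_def lval_def)
  have top0: "?s0 k z = (if k = ({#}, {#}) then (f \<circ> mob ?g) z else 0)" if "0 < Im z" for k z
    using that by (simp add: mono_def maskH_def)
  have suppB: "supp ?sB \<subseteq> bounded_keys (int (sum_list ?ms)) (- int (size m))"
    using supp_foldr_Btr[OF pos(2) supp0] len by simp
  have topB: "?sB k z = (if k = ({#}, m) then deriv (mob ?g) z ^ size m * f (mob ?g z) else 0)"
    if "0 < Im z" "- int (size m) \<le> lval k" for k z
    using foldr_Btr_top[OF pos(2) supp0 top0] that len by simp
  have "- int (size m) + int (length ?ls) \<le> lval k"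
    using assms(3) len by (simp add: lval_def)
  then show ?thesis
    unfolding pi_m_def using foldr_Atr_top[OF pos(1) suppB topB assms(2)] len by (simp add: mult.assoc)
qed

lemma piact_top:
  assumes "v \<in> Dch" "\<forall>k\<in>supp v. lval k \<le> lval k0" "0 < Im z"
  shows "piact (a, b, c, d) v k0 z = ((of_real c * z + of_real d)^2) ^ size (fst k0) *
    deriv (mob (a, b, c, d)) z ^ size (snd k0) * v k0 (mob (a, b, c, d) z)"
proof -
  let ?X = "\<lambda>k. ((of_real c * z + of_real d)^2) ^ size (fst k) *
    deriv (mob (a, b, c, d)) z ^ size (snd k) * v k (mob (a, b, c, d) z)"
  have "piact (a, b, c, d) v k0 z = (\<Sum>k\<in>supp v. if k0 = k then ?X k else 0)"
    unfolding piact_def lift_def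
  proof (intro sum.cong refl)
    fix k assume k: "k \<in> supp v"
    then have "partition_key k"
      by (rule Dch_supp_partition_key[OF assms(1)])
    then show "pi_m (a, b, c, d) k (v k) k0 z = (if k0 = k then ?X k else 0)"
      using pi_m_top[of "fst k" "snd k"] assms(2,3) k by simp
  qed
  also have "\<dots> = ?X k0"
    using assms(1) by (auto simp: Dch_def supp_def)
  finally show ?thesis .
qed

lemma power2_power_times_inverse_power:
  assumes "(w :: complex) \<noteq> 0"
  shows "(w^2) ^ p * (1 / w^2) ^ q = w powi (2 * (int p - int q))"
proof -
  have "w powi (2 * (int p - int q)) = w powi int (2 * p) * w powi (- int (2 * q))"
    using assms by (simp add: power_int_add[symmetric] algebra_simps)
  also have "\<dots> = w ^ (2 * p) * inverse (w ^ (2 * q))"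
    by (simp only: power_int_minus power_int_of_nat)
  also have "\<dots> = (w^2) ^ p * (1 / w^2) ^ q"
    by (simp add: power_mult power_one_over divide_inverse power_inverse)
  finally show ?thesis
    by simp
qed

lemma piact_top_eq_slash:
  assumes "g \<in> SL2Z" "v \<in> Dch" "\<forall>k\<in>supp v. lval k \<le> lval k0" "0 < Im z"
  shows "piact (of_intm g) v k0 z = slash (- 2 * lval k0) g (v k0) z"
proof -
  obtain a b c d where g: "g = (a, b, c, d)"
    by (cases g)
  let ?j = "automorphy_factor g z"
  have "piact (of_intm g) v k0 z =
      (?j^2) ^ size (fst k0) * (1 / ?j^2) ^ size (snd k0) * v k0 (mob (of_intm g) z)"
    using piact_top[OF assms(2-4)] deriv_mob[OF assms(1,4)]
    by (simp add: g of_intm_def automorphy_factor_def)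
  also have "\<dots> = ?j powi (- (- 2 * lval k0)) * v k0 (mob (of_intm g) z)"
    using power2_power_times_inverse_power[OF automorphy_factor_nonzero[OF assms(1,4)]]
    by (simp add: lval_def)
  finally show ?thesis
    by (simp add: slash_eq)
qed

section \<open>Reduction to Im \<tau> \<ge> 1/2\<close>

lemma bottom_row_bounded:
  assumes "0 < Im \<tau>" "cmod (of_int c * \<tau> + of_int d) \<le> 1"
  shows "\<bar>c\<bar> \<le> \<lceil>1 / Im \<tau>\<rceil>" "\<bar>d\<bar> \<le> \<lceil>1 + \<lceil>1 / Im \<tau>\<rceil> * \<bar>Re \<tau>\<bar>\<rceil>"
proof -
  have "\<bar>Im (of_int c * \<tau> + of_int d)\<bar> \<le> 1"
    using abs_Im_le_cmod assms(2) order_trans by blast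
  then have "\<bar>real_of_int c\<bar> * Im \<tau> \<le> 1"
    using assms(1) by (simp add: abs_mult)
  then have "\<bar>real_of_int c\<bar> \<le> 1 / Im \<tau>"
    using assms(1) by (simp add: field_simps)
  also have "\<dots> \<le> \<lceil>1 / Im \<tau>\<rceil>"
    by simp
  finally have c: "\<bar>real_of_int c\<bar> \<le> \<lceil>1 / Im \<tau>\<rceil>" .
  then show "\<bar>c\<bar> \<le> \<lceil>1 / Im \<tau>\<rceil>"
    by linarith
  have "\<bar>Re (of_int c * \<tau> + of_int d)\<bar> \<le> 1"
    using abs_Re_le_cmod assms(2) order_trans by blast
  then have "\<bar>c * Re \<tau> + d\<bar> \<le> 1"
    by simp
  moreover have "\<bar>c * Re \<tau>\<bar> \<le> \<lceil>1 / Im \<tau>\<rceil> * \<bar>Re \<tau>\<bar>"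
    using c by (simp add: abs_mult mult_right_mono)
  ultimately have "\<bar>real_of_int d\<bar> \<le> 1 + \<lceil>1 / Im \<tau>\<rceil> * \<bar>Re \<tau>\<bar>"
    by linarith
  also have "\<dots> \<le> \<lceil>1 + \<lceil>1 / Im \<tau>\<rceil> * \<bar>Re \<tau>\<bar>\<rceil>"
    by simp
  finally show "\<bar>d\<bar> \<le> \<lceil>1 + \<lceil>1 / Im \<tau>\<rceil> * \<bar>Re \<tau>\<bar>\<rceil>"
    by linarith
qed

lemma finite_small_automorphy_factors:
  assumes "0 < Im \<tau>"
  shows "finite ((\<lambda>g. cmod (automorphy_factor g \<tau>)) ` {g \<in> SL2Z. cmod (automorphy_factor g \<tau>) \<le> 1})"
proof -
  define K where "K = \<lceil>1 / Im \<tau>\<rceil>"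
  define K' where "K' = \<lceil>1 + K * \<bar>Re \<tau>\<bar>\<rceil>"
  let ?r = "\<lambda>(c, d). cmod (of_int c * \<tau> + of_int d)"
  have "(\<lambda>g. cmod (automorphy_factor g \<tau>)) ` {g \<in> SL2Z. cmod (automorphy_factor g \<tau>) \<le> 1}
      \<subseteq> ?r ` ({-K..K} \<times> {-K'..K'})"
  proof clarify
    fix a b c d :: int
    assume "cmod (automorphy_factor (a, b, c, d) \<tau>) \<le> 1"
    then have "cmod (of_int c * \<tau> + of_int d) \<le> 1"
      by (simp add: automorphy_factor_def)
    then have "\<bar>c\<bar> \<le> K" "\<bar>d\<bar> \<le> K'"
      using bottom_row_bounded[OF assms] unfolding K_def K'_def by blast+
    then have "(c, d) \<in> {-K..K} \<times> {-K'..K'}"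
      by (simp add: abs_le_iff)
    moreover have "cmod (automorphy_factor (a, b, c, d) \<tau>) = ?r (c, d)"
      by (simp add: automorphy_factor_def)
    ultimately show "cmod (automorphy_factor (a, b, c, d) \<tau>) \<in> ?r ` ({-K..K} \<times> {-K'..K'})"
      by (intro rev_image_eqI)
  qed
  then show ?thesis
    by (rule finite_subset) simp
qed

lemma exists_min_automorphy_factor:
  assumes "0 < Im \<tau>"
  obtains g where "g \<in> SL2Z"
    "\<And>h. h \<in> SL2Z \<Longrightarrow> cmod (automorphy_factor g \<tau>) \<le> cmod (automorphy_factor h \<tau>)"
proof -
  let ?V = "(\<lambda>g. cmod (automorphy_factor g \<tau>)) ` {g \<in> SL2Z. cmod (automorphy_factor g \<tau>) \<le> 1}"
  have fin: "finite ?V"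
    by (rule finite_small_automorphy_factors[OF assms])
  have "cmod (automorphy_factor (1, 0, 0, 1) \<tau>) = 1"
    by (simp add: automorphy_factor_def)
  then have one: "1 \<in> ?V"
    by (intro image_eqI[of _ _ "(1, 0, 0, 1)"]) (auto simp: SL2Z_iff)
  then have "Min ?V \<in> ?V"
    using Min_in[OF fin] by blast
  then obtain g where g: "g \<in> SL2Z" "cmod (automorphy_factor g \<tau>) = Min ?V"
    by (metis (no_types, lifting) imageE mem_Collect_eq)
  have "Min ?V \<le> 1"
    using Min_le[OF fin one] .
  have "cmod (automorphy_factor g \<tau>) \<le> cmod (automorphy_factor h \<tau>)" if "h \<in> SL2Z" for h
  proof (cases "cmod (automorphy_factor h \<tau>) \<le> 1")
    case True
    then show ?thesis
      using that g(2) fin by (auto intro: Min_le)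
  next
    case False
    then show ?thesis
      using g(2) \<open>Min ?V \<le> 1\<close> by simp
  qed
  then show thesis
    using that g(1) by blast
qed

lemma Im_ge_half_if_norm_ge_1:
  assumes "1 \<le> cmod w" "\<bar>Re w\<bar> \<le> 1/2" "0 < Im w"
  shows "1/2 \<le> Im w"
proof -
  have "1 \<le> (Re w)^2 + (Im w)^2"
    using assms(1) by (simp add: cmod_def)
  moreover have "(Re w)^2 \<le> (1/2)^2"
    using power_mono[OF assms(2), of 2] by simp
  ultimately have "(1/2)^2 \<le> (Im w)^2"
    by (simp add: power2_eq_square)
  then show ?thesis
    using power2_le_imp_le[of "1/2" "Im w"] assms(3) by simp
qed

text \<open>Minimise |c\<tau> + d|, translate into the strip |Re| \<le> 1/2, and compare with the
  image under \<open>S = (0, -1, 1, 0)\<close>, whose automorphy factor is w times the old one.\<close>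

lemma exists_SL2Z_Im_ge_half:
  assumes "0 < Im \<tau>"
  obtains \<sigma> where "\<sigma> \<in> SL2Z" "1/2 \<le> Im (mob (of_intm \<sigma>) \<tau>)"
proof -
  obtain g where g: "g \<in> SL2Z"
    and min: "\<And>h. h \<in> SL2Z \<Longrightarrow> cmod (automorphy_factor g \<tau>) \<le> cmod (automorphy_factor h \<tau>)"
    using exists_min_automorphy_factor[OF assms] by blast
  define n where "n = \<lfloor>Re (mob (of_intm g) \<tau>) + 1/2\<rfloor>"
  define \<sigma> where "\<sigma> = mmul (1, -n, 0, 1) g"
  obtain a b c d where \<sigma>_eq: "\<sigma> = (a, b, c, d)"
    by (cases \<sigma>)
  have \<sigma>: "\<sigma> \<in> SL2Z"
    unfolding \<sigma>_def by (intro mmul_SL2Z g) (simp add: SL2Z_iff)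
  define w where "w = mob (of_intm \<sigma>) \<tau>"
  have "w = mob (of_intm g) \<tau> - of_int n"
    using mob_mmul[OF g assms, of "(1, -n, 0, 1)"] by (simp add: w_def \<sigma>_def mob_def of_intm_def)
  then have Re_w: "Re w = Re (mob (of_intm g) \<tau>) - n"
    by simp
  have "n \<le> Re (mob (of_intm g) \<tau>) + 1/2" "Re (mob (of_intm g) \<tau>) + 1/2 < n + 1"
    unfolding n_def by linarith+
  then have re: "\<bar>Re w\<bar> \<le> 1/2"
    unfolding Re_w abs_le_iff by linarith
  have j: "automorphy_factor \<sigma> \<tau> \<noteq> 0"
    by (rule automorphy_factor_nonzero[OF \<sigma> assms])
  have "automorphy_factor g \<tau> = automorphy_factor \<sigma> \<tau>"
    by (cases g) (simp add: \<sigma>_def mmul_def automorphy_factor_def)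
  then have "cmod (automorphy_factor \<sigma> \<tau>) \<le> cmod (automorphy_factor (mmul (0, -1, 1, 0) \<sigma>) \<tau>)"
    using min[of "mmul (0, -1, 1, 0) \<sigma>"] by (simp add: mmul_SL2Z \<sigma> SL2Z_iff)
  also have "automorphy_factor (mmul (0, -1, 1, 0) \<sigma>) \<tau> = w * automorphy_factor \<sigma> \<tau>"
    using j by (simp add: \<sigma>_eq w_def mob_of_intm mmul_def automorphy_factor_def)
  finally have "1 \<le> cmod w"
    using j by (simp add: norm_mult mult_le_cancel_right1)
  moreover have "0 < Im w"
    unfolding w_def by (rule Im_mob_pos[OF \<sigma> assms])
  ultimately have "1/2 \<le> Im w"
    using Im_ge_half_if_norm_ge_1 re by blast
  then show thesis
    using that \<sigma> unfolding w_def by blast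
qed

section \<open>q-expansions\<close>

lemma has_sum_int_imp_sums_nat:
  assumes "\<forall>m<0. g m = 0" "(g has_sum F) UNIV"
  shows "(\<lambda>n. g (int n)) sums F"
proof -
  have "(g has_sum F) UNIV \<longleftrightarrow> (g has_sum F) (range int)"
  proof (rule has_sum_cong_neutral)
    fix m assume "m \<in> UNIV - range int"
    then have "m < 0"
      by (metis Diff_iff nonneg_int_cases not_less rangeI)
    then show "g m = 0"
      using assms(1) by simp
  qed auto
  then have "((g \<circ> int) has_sum F) UNIV"
    using assms(2) by (simp add: has_sum_reindex)
  then show ?thesis
    by (simp add: has_sum_imp_sums o_def)
qed

lemma norm_exp_q: "norm (exp (2 * of_real pi * \<i> * \<tau> / of_nat N)) = exp (- 2 * pi * Im \<tau> / N)"
  by (simp add: Re_divide_of_nat)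

lemma q_expansion_conv_radius:
  assumes "N > 0" "\<And>\<tau>. 0 < Im \<tau> \<Longrightarrow> (\<lambda>n. a n * exp (2 * of_real pi * \<i> * \<tau> / of_nat N) ^ n) sums f \<tau>"
  shows "1 \<le> conv_radius a"
proof (rule conv_radius_geI_ex')
  fix r :: real assume r: "0 < r" "ereal r < 1"
  define y where "y = real N * (- ln r) / (2 * pi)"
  have "ln r < 0"
    using r by simp
  then have "0 < y"
    using assms(1) unfolding y_def by (intro divide_pos_pos mult_pos_pos) auto
  moreover have "exp (2 * of_real pi * \<i> * (\<i> * of_real y) / of_nat N) = of_real r"
  proof -
    have "exp (2 * of_real pi * \<i> * (\<i> * of_real y) / of_nat N) = exp (of_real (- 2 * pi * y / N))"
      by (simp add: field_simps)
    also have "- 2 * pi * y / N = ln r"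
      unfolding y_def using assms(1) by (simp add: field_simps)
    finally show ?thesis
      using r(1) by (simp add: exp_of_real)
  qed
  ultimately show "summable (\<lambda>n. a n * of_real r ^ n)"
    using assms(2)[of "\<i> * of_real y"] by (auto simp: sums_iff)
qed

lemma holo_at_inf_q_expansion:
  assumes "holo_at_inf f"
  obtains N :: nat and G where "N > 0" "G holomorphic_on ball 0 1"
    "\<And>\<tau>. 0 < Im \<tau> \<Longrightarrow> G (exp (2 * of_real pi * \<i> * \<tau> / of_nat N)) = f \<tau>"
proof -
  obtain N u where N: "N > 0" "\<forall>m<0. u m = 0"
    and has_sum: "\<And>\<tau>. 0 < Im \<tau> \<Longrightarrow>
      ((\<lambda>m. u m * exp (2 * of_real pi * \<i> * of_int m * \<tau> / of_nat N)) has_sum f \<tau>) UNIV"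
    using assms unfolding holo_at_inf_def by blast
  define a where "a n = u (int n)" for n
  define q where "q \<tau> = exp (2 * of_real pi * \<i> * \<tau> / of_nat N)" for \<tau>
  have sums: "(\<lambda>n. a n * q \<tau> ^ n) sums f \<tau>" if "0 < Im \<tau>" for \<tau>
  proof -
    have "exp (2 * of_real pi * \<i> * of_int (int n) * \<tau> / of_nat N) = q \<tau> ^ n" for n
      unfolding q_def by (simp flip: exp_of_nat_mult add: field_simps)
    then show ?thesis
      using has_sum_int_imp_sums_nat[OF _ has_sum[OF that]] N(2) by (simp add: a_def)
  qed
  have conv: "conv_radius a \<ge> 1"
    using q_expansion_conv_radius[OF N(1)] sums unfolding q_def by blast
  have "ball (0 :: complex) 1 \<subseteq> eball 0 (fps_conv_radius (Abs_fps a))"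
  proof
    fix w :: complex assume "w \<in> ball 0 1"
    then have "ereal (dist 0 w) < 1"
      by simp
    then have "ereal (dist 0 w) < conv_radius a"
      using conv by (rule less_le_trans)
    then show "w \<in> eball 0 (fps_conv_radius (Abs_fps a))"
      by (simp add: fps_conv_radius_def)
  qed
  then have "eval_fps (Abs_fps a) holomorphic_on ball 0 1"
    by (rule holomorphic_on_eval_fps)
  moreover have "eval_fps (Abs_fps a) (q \<tau>) = f \<tau>" if "0 < Im \<tau>" for \<tau>
    using sums[OF that] by (simp add: eval_fps_def sums_iff)
  ultimately show thesis
    using that N(1) unfolding q_def by blast
qed

lemma holo_at_inf_bounded:
  assumes "holo_at_inf f"
  obtains B where "\<And>\<tau>. 1/2 \<le> Im \<tau> \<Longrightarrow> norm (f \<tau>) \<le> B"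
proof -
  obtain N G where N: "N > 0" and G: "G holomorphic_on ball 0 1"
    and fG: "\<And>\<tau>. 0 < Im \<tau> \<Longrightarrow> G (exp (2 * of_real pi * \<i> * \<tau> / of_nat N)) = f \<tau>"
    using holo_at_inf_q_expansion[OF assms] by blast
  define r where "r = exp (- pi / N)"
  have "r < 1"
    using N by (simp add: r_def)
  then have "compact (G ` cball 0 r)"
    using G by (intro compact_continuous_image holomorphic_on_imp_continuous_on)
      (auto intro: holomorphic_on_subset)
  then obtain B where B: "\<And>w. w \<in> cball 0 r \<Longrightarrow> norm (G w) \<le> B"
    by (meson compact_imp_bounded bounded_iff image_eqI)
  have "norm (f \<tau>) \<le> B" if "1/2 \<le> Im \<tau>" for \<tau>
  proof -
    have "- 2 * pi * Im \<tau> / N \<le> - pi / N"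
      using that N by (simp add: field_simps)
    then have "exp (2 * of_real pi * \<i> * \<tau> / of_nat N) \<in> cball 0 r"
      by (simp add: norm_exp_q r_def)
    then show ?thesis
      using B fG that by fastforce
  qed
  then show thesis
    using that by blast
qed

lemma q_inverse:
  assumes "N > 0" "z \<noteq> 0"
  defines "\<tau> \<equiv> of_nat N * Ln z / (2 * of_real pi * \<i>)"
  shows "exp (2 * of_real pi * \<i> * \<tau> / of_nat N) = z" "Im \<tau> = - real N * ln (norm z) / (2 * pi)"
proof -
  show "exp (2 * of_real pi * \<i> * \<tau> / of_nat N) = z"
    using assms by (simp add: \<tau>_def field_simps)
  have "\<tau> = - \<i> * (of_real (real N / (2 * pi)) * Ln z)"
    by (simp add: \<tau>_def field_simps)
  then show "Im \<tau> = - real N * ln (norm z) / (2 * pi)"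
    using assms(2) by simp
qed

text \<open>In the variable q = exp(2\<pi>i\<tau>/N) the line Im \<tau> = y is the circle |q| = exp(-2\<pi>y/N),
  and \<tau>0 lies inside it.\<close>

lemma holo_at_inf_maximum_modulus:
  assumes "holo_at_inf f" "0 < y" "y < Im \<tau>0" "\<And>\<tau>. Im \<tau> = y \<Longrightarrow> norm (f \<tau>) \<le> B"
  shows "norm (f \<tau>0) \<le> B"
proof -
  obtain N G where N: "N > 0" and G: "G holomorphic_on ball 0 1"
    and fG: "\<And>\<tau>. 0 < Im \<tau> \<Longrightarrow> G (exp (2 * of_real pi * \<i> * \<tau> / of_nat N)) = f \<tau>"
    using holo_at_inf_q_expansion[OF assms(1)] by blast
  let ?q = "\<lambda>\<tau>. exp (2 * of_real pi * \<i> * \<tau> / of_nat N)"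
  define r where "r = exp (- 2 * pi * y / N)"
  have r: "0 < r" "r < 1"
    using assms(2) N by (auto simp: r_def)
  have "norm (G (?q \<tau>0)) \<le> B"
  proof (rule maximum_modulus_frontier[of G "cball 0 r"])
    show "G holomorphic_on interior (cball 0 r)"
      using r by (auto intro: holomorphic_on_subset[OF G])
    show "continuous_on (closure (cball 0 r)) G"
      using r by (auto intro: continuous_on_subset[OF holomorphic_on_imp_continuous_on[OF G]])
    show "?q \<tau>0 \<in> cball 0 r"
      using assms(3) N by (simp add: norm_exp_q r_def divide_right_mono)
  next
    fix z :: complex assume "z \<in> frontier (cball 0 r)"
    then have z: "norm z = r" "z \<noteq> 0"
      using r by auto
    define \<tau> where "\<tau> = of_nat N * Ln z / (2 * of_real pi * \<i>)"
    have "Im \<tau> = y"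
      using q_inverse(2)[OF N z(2)] N by (simp add: \<tau>_def z(1) r_def)
    then show "norm (G z) \<le> B"
      using q_inverse(1)[OF N z(2)] fG assms(2,4) unfolding \<tau>_def by metis
  qed simp
  then show ?thesis
    using fG assms(2,3) by simp
qed

lemma holo_at_inf_eq_0_if_le_Im_power:
  assumes "holo_at_inf f" "0 < e" "\<And>\<tau>. 0 < Im \<tau> \<Longrightarrow> norm (f \<tau>) \<le> C * Im \<tau> ^ e" "0 < Im \<tau>0"
  shows "f \<tau>0 = 0"
proof -
  have "norm (f \<tau>0) \<le> C * y ^ e" if "0 < y" "y < Im \<tau>0" for y
    by (rule holo_at_inf_maximum_modulus[OF assms(1) that]) (use assms(3) that(1) in force)
  then have "\<forall>\<^sub>F y in at_right 0. norm (f \<tau>0) \<le> C * y ^ e"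
    using assms(4) by (auto simp: eventually_at_right_field)
  moreover have "((\<lambda>y. C * y ^ e) \<longlongrightarrow> 0) (at_right (0 :: real))"
    using assms(2) by (auto intro!: tendsto_eq_intros)
  ultimately have "norm (f \<tau>0) \<le> 0"
    by (intro tendsto_lowerbound) auto
  then show ?thesis
    by simp
qed

section \<open>Modular forms of negative weight\<close>

lemma holo_at_inf_cong:
  assumes "holo_at_inf f" "\<And>\<tau>. 0 < Im \<tau> \<Longrightarrow> f \<tau> = g \<tau>"
  shows "holo_at_inf g"
proof -
  obtain N u where N: "N > 0" "\<forall>\<tau>. 0 < Im \<tau> \<longrightarrow> f (\<tau> + of_nat N) = f \<tau>" "\<forall>m<0. u m = 0"
    "\<forall>\<tau>. 0 < Im \<tau> \<longrightarrow> ((\<lambda>m. u m * exp (2 * of_real pi * \<i> * of_int m * \<tau> / of_nat N)) has_sum f \<tau>) UNIV"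
    using assms(1) unfolding holo_at_inf_def by blast
  have "\<forall>\<tau>. 0 < Im \<tau> \<longrightarrow> g (\<tau> + of_nat N) = g \<tau>"
    using N(2) assms(2) by simp
  moreover have "\<forall>\<tau>. 0 < Im \<tau> \<longrightarrow>
      ((\<lambda>m. u m * exp (2 * of_real pi * \<i> * of_int m * \<tau> / of_nat N)) has_sum g \<tau>) UNIV"
    using N(4) assms(2) by simp
  ultimately show ?thesis
    unfolding holo_at_inf_def using N(1,3) by blast
qed

lemma norm_over_Im_power_mob:
  assumes "\<sigma> \<in> SL2Z" "0 < Im \<tau>"
  shows "norm (f (mob (of_intm \<sigma>) \<tau>)) / Im (mob (of_intm \<sigma>) \<tau>) ^ e =
    norm (slash (- 2 * int e) \<sigma> f \<tau>) / Im \<tau> ^ e"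
proof -
  let ?j = "cmod (automorphy_factor \<sigma> \<tau>)"
  have j: "?j > 0"
    using automorphy_factor_nonzero[OF assms] by simp
  have "norm (slash (- 2 * int e) \<sigma> f \<tau>) = ?j ^ (2 * e) * norm (f (mob (of_intm \<sigma>) \<tau>))"
    unfolding slash_eq using power_int_of_nat[of "automorphy_factor \<sigma> \<tau>" "2 * e"]
    by (simp add: norm_mult norm_power)
  moreover have "Im \<tau> ^ e = Im (mob (of_intm \<sigma>) \<tau>) ^ e * ?j ^ (2 * e)"
  proof -
    have "Im \<tau> = Im (mob (of_intm \<sigma>) \<tau>) * ?j^2"
      using Im_mob[OF assms(1), of \<tau>] j by simp
    then show ?thesis
      by (simp add: power_mult_distrib power_mult)
  qed
  ultimately show ?thesis
    using j by simp
qed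

definition matrix_mod :: "int \<Rightarrow> imat \<Rightarrow> imat" where
  "matrix_mod N g = (case g of (a, b, c, d) \<Rightarrow> (a mod N, b mod N, c mod N, d mod N))"

lemma finite_matrix_mod_image:
  assumes "N > 0"
  shows "finite (matrix_mod N ` A)"
proof (rule finite_subset)
  show "matrix_mod N ` A \<subseteq> {0..N} \<times> {0..N} \<times> {0..N} \<times> {0..N}"
    using assms by (auto simp: matrix_mod_def less_imp_le split: prod.splits)
qed simp

lemma principal_cong_if_matrix_mod_eq:
  assumes "g \<in> SL2Z" "h \<in> SL2Z" "matrix_mod N g = matrix_mod N h"
  shows "mmul g (minv h) \<in> principal_cong N"
proof -
  obtain a b c d a' b' c' d' where g: "g = (a, b, c, d)" and h: "h = (a', b', c', d')"
    by (cases g; cases h)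
  have det: "a' * d' - b' * c' = 1"
    using assms(2) by (simp add: h SL2Z_iff)
  have "N dvd (a - a')" "N dvd (b - b')" "N dvd (c - c')" "N dvd (d - d')"
    using assms(3) by (simp_all add: g h matrix_mod_def mod_eq_dvd_iff)
  moreover have "a * d' + b * - c' - 1 = (a - a') * d' - (b - b') * c'"
    "c * - b' + d * a' - 1 = - ((c - c') * b') + (d - d') * a'"
    using det by (simp_all add: algebra_simps)
  moreover have "a * - b' + b * a' = - ((a - a') * b') + (b - b') * a'"
    "c * d' + d * - c' = (c - c') * d' - (d - d') * c'"
    by (simp_all add: algebra_simps)
  ultimately show ?thesis
    using mmul_SL2Z[OF assms(1) minv_SL2Z[OF assms(2)]]
    by (simp add: g h principal_cong_def mmul_def minv_def)
qed

lemma finite_uniform_bound: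
  fixes P :: "'a \<Rightarrow> real \<Rightarrow> bool"
  assumes "finite R" "\<And>r. r \<in> R \<Longrightarrow> \<exists>B. P r B" "\<And>r B B'. P r B \<Longrightarrow> B \<le> B' \<Longrightarrow> P r B'"
  shows "\<exists>B. \<forall>r\<in>R. P r B"
  using assms(1,2)
proof (induction R rule: finite_induct)
  case (insert r R)
  obtain B1 B2 where "P r B1" "\<forall>r\<in>R. P r B2"
    using insert by blast
  then have "\<forall>r'\<in>insert r R. P r' (max B1 B2)"
    using assms(3) by (metis insert_iff max.cobounded1 max.cobounded2)
  then show ?case
    by blast
qed simp

lemma slash_bounded_on_representatives:
  assumes "N > 0" "\<And>\<sigma>. \<sigma> \<in> SL2Z \<Longrightarrow> holo_at_inf (slash k \<sigma> f)"
  obtains M where "\<And>\<rho>. \<rho> \<in> SL2Z \<Longrightarrow> \<exists>\<rho>'\<in>SL2Z. matrix_mod N \<rho>' = matrix_mod N \<rho> \<and>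
      (\<forall>\<tau>. 1/2 \<le> Im \<tau> \<longrightarrow> norm (slash k \<rho>' f \<tau>) \<le> M)"
proof -
  have "\<exists>M. \<forall>r\<in>matrix_mod N ` SL2Z. \<exists>\<rho>\<in>SL2Z. matrix_mod N \<rho> = r \<and>
      (\<forall>\<tau>. 1/2 \<le> Im \<tau> \<longrightarrow> norm (slash k \<rho> f \<tau>) \<le> M)"
  proof (rule finite_uniform_bound)
    fix r assume "r \<in> matrix_mod N ` SL2Z"
    then obtain \<rho> where \<rho>: "\<rho> \<in> SL2Z" "matrix_mod N \<rho> = r"
      by blast
    moreover obtain M where "\<And>\<tau>. 1/2 \<le> Im \<tau> \<Longrightarrow> norm (slash k \<rho> f \<tau>) \<le> M"
      using holo_at_inf_bounded[OF assms(2)[OF \<rho>(1)]] by blast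
    ultimately show "\<exists>M. \<exists>\<rho>\<in>SL2Z. matrix_mod N \<rho> = r \<and>
        (\<forall>\<tau>. 1/2 \<le> Im \<tau> \<longrightarrow> norm (slash k \<rho> f \<tau>) \<le> M)"
      by blast
  qed (use finite_matrix_mod_image[OF assms(1)] in \<open>force+\<close>)
  then show thesis
    using that by blast
qed

lemma decompose_mod_principal_cong:
  assumes "0 < Im \<tau>"
    and reps: "\<And>\<rho>. \<rho> \<in> SL2Z \<Longrightarrow> \<exists>\<rho>'\<in>SL2Z. matrix_mod N \<rho>' = matrix_mod N \<rho> \<and> P \<rho>'"
  obtains \<gamma> \<rho>' \<tau>' where "\<gamma> \<in> principal_cong N" "\<rho>' \<in> SL2Z" "P \<rho>'" "1/2 \<le> Im \<tau>'"
    "\<tau> = mob (of_intm \<gamma>) (mob (of_intm \<rho>') \<tau>')"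
proof -
  obtain \<sigma> where \<sigma>: "\<sigma> \<in> SL2Z" "1/2 \<le> Im (mob (of_intm \<sigma>) \<tau>)"
    using exists_SL2Z_Im_ge_half[OF assms(1)] by blast
  define \<tau>' where "\<tau>' = mob (of_intm \<sigma>) \<tau>"
  have \<rho>: "minv \<sigma> \<in> SL2Z"
    by (rule minv_SL2Z[OF \<sigma>(1)])
  obtain \<rho>' where \<rho>': "\<rho>' \<in> SL2Z" "matrix_mod N \<rho>' = matrix_mod N (minv \<sigma>)" "P \<rho>'"
    using reps[OF \<rho>] by blast
  define \<gamma> where "\<gamma> = mmul (minv \<sigma>) (minv \<rho>')"
  have "\<gamma> \<in> principal_cong N"
    unfolding \<gamma>_def by (rule principal_cong_if_matrix_mod_eq[OF \<rho> \<rho>'(1) \<rho>'(2)[symmetric]])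
  moreover have "mmul \<gamma> \<rho>' = minv \<sigma>"
    by (simp add: \<gamma>_def mmul_assoc mmul_minv_left[OF \<rho>'(1)] mmul_right_id)
  then have "\<tau> = mob (of_intm \<gamma>) (mob (of_intm \<rho>') \<tau>')"
    using mob_minv[OF \<sigma>(1) assms(1)] mob_mmul[OF \<rho>'(1), of \<tau>' \<gamma>] \<sigma>(2) by (simp add: \<tau>'_def)
  ultimately show thesis
    using that \<rho>'(1,3) \<sigma>(2) unfolding \<tau>'_def by blast
qed

text \<open>|f \<tau>| / (Im \<tau>)^e is \<Gamma>-invariant by \<open>norm_over_Im_power_mob\<close>, and at a point
  \<open>\<rho>' \<tau>'\<close> with Im \<tau>' \<ge> 1/2 it is bounded through the slash of f by the representative \<rho>'.\<close>

lemma neg_weight_le_Im_power: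
  assumes "congruence_subgroup \<Gamma>"
    and inv: "\<And>g \<tau>. g \<in> \<Gamma> \<Longrightarrow> 0 < Im \<tau> \<Longrightarrow> slash (- 2 * int e) g f \<tau> = f \<tau>"
    and cusps: "\<And>\<sigma>. \<sigma> \<in> SL2Z \<Longrightarrow> holo_at_inf (slash (- 2 * int e) \<sigma> f)"
  obtains C where "\<And>\<tau>. 0 < Im \<tau> \<Longrightarrow> norm (f \<tau>) \<le> C * Im \<tau> ^ e"
proof -
  let ?k = "- 2 * int e"
  obtain N where N: "N > 0" "principal_cong N \<subseteq> \<Gamma>" and \<Gamma>: "\<Gamma> \<subseteq> SL2Z"
    using assms(1) unfolding congruence_subgroup_def by blast
  obtain M where M: "\<And>\<rho>. \<rho> \<in> SL2Z \<Longrightarrow> \<exists>\<rho>'\<in>SL2Z. matrix_mod N \<rho>' = matrix_mod N \<rho> \<and>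
      (\<forall>\<tau>. 1/2 \<le> Im \<tau> \<longrightarrow> norm (slash ?k \<rho>' f \<tau>) \<le> M)"
    using slash_bounded_on_representatives[OF N(1) cusps] by blast
  have "norm (f \<tau>) / Im \<tau> ^ e \<le> 2 ^ e * M" if \<tau>: "0 < Im \<tau>" for \<tau>
  proof -
    obtain \<gamma> \<rho>' \<tau>' where \<gamma>: "\<gamma> \<in> principal_cong N" and \<rho>': "\<rho>' \<in> SL2Z"
      and bound: "\<forall>\<tau>. 1/2 \<le> Im \<tau> \<longrightarrow> norm (slash ?k \<rho>' f \<tau>) \<le> M"
      and \<tau>': "1/2 \<le> Im \<tau>'" and \<tau>_eq: "\<tau> = mob (of_intm \<gamma>) (mob (of_intm \<rho>') \<tau>')"
      using decompose_mod_principal_cong[OF \<tau> M] by blast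
    have \<tau>'_pos: "0 < Im \<tau>'"
      using \<tau>' by simp
    define w where "w = mob (of_intm \<rho>') \<tau>'"
    have w: "0 < Im w"
      unfolding w_def by (rule Im_mob_pos[OF \<rho>' \<tau>'_pos])
    have "\<gamma> \<in> \<Gamma>"
      using \<gamma> N(2) by blast
    have "norm (f \<tau>) / Im \<tau> ^ e = norm (slash ?k \<gamma> f w) / Im w ^ e"
      unfolding \<tau>_eq w_def[symmetric] using \<open>\<gamma> \<in> \<Gamma>\<close> \<Gamma> w by (intro norm_over_Im_power_mob) auto
    also have "\<dots> = norm (f w) / Im w ^ e"
      using inv[OF \<open>\<gamma> \<in> \<Gamma>\<close> w] by simp
    also have "\<dots> = norm (slash ?k \<rho>' f \<tau>') / Im \<tau>' ^ e"
      unfolding w_def by (rule norm_over_Im_power_mob[OF \<rho>' \<tau>'_pos])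
    also have "\<dots> \<le> M / (1/2) ^ e"
    proof -
      have "norm (slash ?k \<rho>' f \<tau>') \<le> M"
        using bound \<tau>' by blast
      then show ?thesis
        using \<tau>' by (intro frac_le power_mono) (auto intro: order_trans[OF norm_ge_zero])
    qed
    finally show ?thesis
      by (simp add: power_one_over mult.commute)
  qed
  then have "norm (f \<tau>) \<le> 2 ^ e * M * Im \<tau> ^ e" if "0 < Im \<tau>" for \<tau>
    using that by (simp add: pos_divide_le_eq)
  then show thesis
    using that by blast
qed

lemma neg_weight_eq_0:
  assumes "congruence_subgroup \<Gamma>" "0 < e"
    and "\<And>g \<tau>. g \<in> \<Gamma> \<Longrightarrow> 0 < Im \<tau> \<Longrightarrow> slash (- 2 * int e) g f \<tau> = f \<tau>"
    and cusps: "\<And>\<sigma>. \<sigma> \<in> SL2Z \<Longrightarrow> holo_at_inf (slash (- 2 * int e) \<sigma> f)"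
    and "\<And>\<tau>. Im \<tau> \<le> 0 \<Longrightarrow> f \<tau> = 0"
  shows "f = (\<lambda>_. 0)"
proof
  fix \<tau>
  obtain C where C: "\<And>\<tau>. 0 < Im \<tau> \<Longrightarrow> norm (f \<tau>) \<le> C * Im \<tau> ^ e"
    using neg_weight_le_Im_power[OF assms(1,3) cusps] by blast
  have "holo_at_inf f"
    using cusps[of "(1, 0, 0, 1)"]
    by (rule holo_at_inf_cong) (simp_all add: SL2Z_iff slash_def mob_def of_intm_def)
  then show "f \<tau> = 0"
    using holo_at_inf_eq_0_if_le_Im_power[OF _ assms(2) C] assms(5) by (cases "0 < Im \<tau>") auto
qed

lemma MF_even_weightI:
  assumes "congruence_subgroup \<Gamma>" "f holomorphic_on upper" "\<And>\<tau>. Im \<tau> \<le> 0 \<Longrightarrow> f \<tau> = 0"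
    and inv: "\<And>g \<tau>. g \<in> \<Gamma> \<Longrightarrow> 0 < Im \<tau> \<Longrightarrow> slash (2 * k) g f \<tau> = f \<tau>"
    and cusps: "\<And>\<sigma>. \<sigma> \<in> SL2Z \<Longrightarrow> holo_at_inf (slash (2 * k) \<sigma> f)"
  shows "f \<in> MF (2 * k) \<Gamma>"
proof -
  have \<Gamma>: "\<Gamma> \<subseteq> SL2Z"
    using assms(1) by (simp add: congruence_subgroup_def)
  have "f = (\<lambda>_. 0)" if neg: "2 * k < 0"
  proof (rule neg_weight_eq_0[OF assms(1), of "nat (- k)"])
    have k: "2 * k = - 2 * int (nat (- k))"
      using neg by simp
    show "slash (- 2 * int (nat (- k))) g f \<tau> = f \<tau>" if "g \<in> \<Gamma>" "0 < Im \<tau>" for g \<tau>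
      unfolding k[symmetric] by (rule inv[OF that])
    show "holo_at_inf (slash (- 2 * int (nat (- k))) \<sigma> f)" if "\<sigma> \<in> SL2Z" for \<sigma>
      unfolding k[symmetric] by (rule cusps[OF that])
  qed (use neg assms(3) in auto)
  moreover have "f (mob (of_intm g) \<tau>) =
      (case g of (a, b, c, d) \<Rightarrow> (of_int c * \<tau> + of_int d) powi (2 * k)) * f \<tau>"
    if "g \<in> \<Gamma>" "0 < Im \<tau>" for g \<tau>
    using inv[OF that] slash_invariant_iff[of g \<tau> "2 * k" f] that \<Gamma> by blast
  ultimately show ?thesis
    using assms(2,3) cusps unfolding MF_def by (intro CollectI conjI impI ballI allI) auto
qed

section \<open>The filtration by partition pairs\<close>

lemma part_gt_iff_lexord: "part_gt l l' \<longleftrightarrow> (plist l', plist l) \<in> lexord less_than"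
  unfolding part_gt_def Let_def lexord_take_index_conv by (auto simp: min.commute)

lemma part_gt_trans: "part_gt l l' \<Longrightarrow> part_gt l' l'' \<Longrightarrow> part_gt l l''"
  unfolding part_gt_iff_lexord using lexord_trans trans_less_than by blast

lemma part_gt_asym: "part_gt l l' \<Longrightarrow> \<not> part_gt l' l"
  unfolding part_gt_iff_lexord using lexord_asymmetric[OF asym_less_than] by blast

lemma pair_gt_imp_lval_le: "pair_gt k k' \<Longrightarrow> lval k' \<le> lval k"
  unfolding pair_gt_def lval_def by auto

lemma pair_gt_trans: "pair_gt k k' \<Longrightarrow> pair_gt k' k'' \<Longrightarrow> pair_gt k k''"
  using part_gt_trans pair_gt_imp_lval_le unfolding pair_gt_def lval_def by (smt (verit))

lemma pair_gt_asym: "pair_gt k k' \<Longrightarrow> \<not> pair_gt k' k"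
  using part_gt_asym unfolding pair_gt_def lval_def by (smt (verit))

lemma Vfilt_kernel:
  assumes "pair_gt k0 k1" "wt k1 = wt k0"
    and next_below: "\<And>k. partition_key k \<Longrightarrow> pair_gt k0 k \<Longrightarrow> wt k = wt k0 \<Longrightarrow> pair_le k k1"
  shows "{v \<in> Vfilt k0. v k0 = (\<lambda>_. 0)} = Vfilt k1"
proof (intro equalityI subsetI)
  fix v assume "v \<in> {v \<in> Vfilt k0. v k0 = (\<lambda>_. 0)}"
  then have v: "v \<in> Dch" "\<And>k. k \<in> supp v \<Longrightarrow> pair_le k k0 \<and> wt k = wt k0" "k0 \<notin> supp v"
    by (auto simp: Vfilt_def supp_def)
  have "pair_le k k1 \<and> wt k = wt k1" if "k \<in> supp v" for k
  proof -
    have "partition_key k"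
      using Dch_supp_partition_key[OF v(1) that] .
    moreover have "pair_gt k0 k"
      using v(2)[OF that] v(3) that by (auto simp: pair_le_def)
    ultimately show ?thesis
      using next_below v(2)[OF that] assms(2) by simp
  qed
  then show "v \<in> Vfilt k1"
    using v(1) by (simp add: Vfilt_def)
next
  fix v assume v: "v \<in> Vfilt k1"
  have "pair_le k k0 \<and> wt k = wt k0" if "k \<in> supp v" for k
    using v that assms(1,2) pair_gt_trans by (fastforce simp: Vfilt_def pair_le_def)
  moreover have "k0 \<notin> supp v"
    using v assms(1) pair_gt_asym by (fastforce simp: Vfilt_def pair_le_def)
  ultimately show "v \<in> {v \<in> Vfilt k0. v k0 = (\<lambda>_. 0)}"
    using v by (simp add: Vfilt_def supp_def)
qed

lemma Vinv0_top_coeff_in_MF: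
  assumes "congruence_subgroup \<Gamma>" "v \<in> Vinv0 \<Gamma> k0"
  shows "v k0 \<in> MF (2 * (- lval k0)) \<Gamma>"
proof -
  let ?f = "v k0" and ?k = "2 * (- lval k0)"
  have v: "v \<in> Vfilt k0" "\<forall>g\<in>\<Gamma>. piact (of_intm g) v = v"
    "\<forall>\<sigma>\<in>SL2Z. \<forall>k. holo_at_inf (piact (of_intm \<sigma>) v k)"
    using assms(2) by (simp_all add: Vinv0_def)
  then have D: "v \<in> Dch"
    by (simp add: Vfilt_def)
  have "lval k \<le> lval k0" if "k \<in> supp v" for k
  proof -
    have "pair_le k k0"
      using v(1) that by (simp add: Vfilt_def)
    then show ?thesis
      unfolding pair_le_def using pair_gt_imp_lval_le by blast
  qed
  then have slash: "slash ?k g ?f \<tau> = piact (of_intm g) v k0 \<tau>" if "g \<in> SL2Z" "0 < Im \<tau>" for g \<tau>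
    using piact_top_eq_slash[OF that(1) D _ that(2)] by simp
  show ?thesis
  proof (rule MF_even_weightI[OF assms(1)])
    show "?f holomorphic_on upper" "\<And>\<tau>. Im \<tau> \<le> 0 \<Longrightarrow> ?f \<tau> = 0"
      using Dch_component[OF D] by blast+
    show "slash ?k g ?f \<tau> = ?f \<tau>" if "g \<in> \<Gamma>" "0 < Im \<tau>" for g \<tau>
    proof -
      have "slash ?k g ?f \<tau> = piact (of_intm g) v k0 \<tau>"
        using that assms(1) by (intro slash) (auto simp: congruence_subgroup_def)
      then show ?thesis
        using v(2) that(1) by simp
    qed
    show "holo_at_inf (slash ?k \<sigma> ?f)" if "\<sigma> \<in> SL2Z" for \<sigma>
      by (rule holo_at_inf_cong[OF v(3)[rule_format, OF that, of k0]]) (simp only: slash[OF that])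
  qed
qed

theorem lemma2p4:
  fixes \<Gamma> :: "imat set" and l0 m0 l1 m1 :: "nat multiset"
  assumes "congruence_subgroup \<Gamma>"
    and "is_partition l0" "is_partition m0" "is_partition l1" "is_partition m1"
    and "pair_gt (l0, m0) (l1, m1)" "wt (l1, m1) = wt (l0, m0)"
    and "\<forall>l m. is_partition l \<and> is_partition m \<and> pair_gt (l0, m0) (l, m) \<and> wt (l, m) = wt (l0, m0)
               \<longrightarrow> pair_le (l, m) (l1, m1)"
  shows "(\<forall>v\<in>Vinv0 \<Gamma> (l0, m0). v (l0, m0) \<in> MF (2 * (int (size m0) - int (size l0))) \<Gamma>) \<and>
         {v \<in> Vinv0 \<Gamma> (l0, m0). v (l0, m0) = (\<lambda>_. 0)} = Vinv0 \<Gamma> (l1, m1)"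
proof
  have "2 * (int (size m0) - int (size l0)) = 2 * (- lval (l0, m0))"
    by (simp add: lval_def)
  then show "\<forall>v\<in>Vinv0 \<Gamma> (l0, m0). v (l0, m0) \<in> MF (2 * (int (size m0) - int (size l0))) \<Gamma>"
    using Vinv0_top_coeff_in_MF[OF assms(1)] by simp
next
  have "{v \<in> Vfilt (l0, m0). v (l0, m0) = (\<lambda>_. 0)} = Vfilt (l1, m1)"
    using assms(6-8) by (intro Vfilt_kernel) (auto simp: partition_key_def)
  then show "{v \<in> Vinv0 \<Gamma> (l0, m0). v (l0, m0) = (\<lambda>_. 0)} = Vinv0 \<Gamma> (l1, m1)"
    unfolding Vinv0_def by blast
qed

end
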